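(* Let $\Gamma$ be a rationally metrised graph and $u,v$ vertices of $\Gamma$. Let $\mathrm W_\bullet$ be the filtration of $\mathbb Q\pi_1(\Gamma;u,v)$ given by $\mathrm W_{-k}\mathbb Q\pi_1(\Gamma;u,v)=\mathbb Q\pi_1(\Gamma;u,v)\cdot J^k$, where $J$ is the augmentation ideal of the group algebra $\mathbb Q\pi_1(\Gamma,u)$. Then for every $n\ge0$ the higher cycle pairing induces a perfect pairing \[\int\colon\mathbb Q\pi_1(\Gamma;u,v)/\mathrm W_{-n-1}\otimes\textstyle\bigoplus_{m\le n}\mathrm H_1(\Gamma)^{\otimes m}\to\mathbb Q,\] and the resulting isomorphisms $\mathbb Q\pi_1(\Gamma;u,v)/\mathrm W_{-n-1}\xrightarrow{\sim}\bigoplus_{m\le n}\mathrm H^1(\Gamma)^{\otimes m}$ induce an isomorphism \[\widehat{\mathbb Q}\pi_1(\Gamma;u,v):=\varprojlim_n\mathbb Q\pi_1(\Gamma;u,v)/\mathrm W_{-n-1}\xrightarrow{\sim}\prod_{m\ge0}\mathrm H^1(\Gamma)^{\otimes m}.\]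
   Context: A graph consists of finite sets of vertices $V$, oriented edges $E$ and half-edges $D$, a source map $s\colon E\sqcup D\to V$, and a fixed-point-free involution $e\mapsto e^{-1}$ on $E$, with $t(e):=s(e^{-1})$; graphs are nonempty and connected. A rationally metrised graph also has lengths $\ell\colon E\to\mathbb Q_{>0}$ with $\ell(e^{-1})=\ell(e)$. $\pi_1(\Gamma;u,v)$ is the set of homotopy classes of paths from $u$ to $v$, composition written right to left ($\gamma'\gamma$ means $\gamma$ then $\gamma'$), and $\mathbb Q\pi_1(\Gamma;u,v)$ the $\mathbb Q$-vector space on it. $\mathbb Q\cdot E^{\pm}$ is the $\mathbb Q$-span of edges modulo $e^{-1}=-e$, with pairing $\int_e e'=\pm\ell(e)$ if $e'=e^{\pm1}$ and $0$ otherwise; $\mathrm H_1(\Gamma)=\mathrm H_1(\Gamma,\mathbb Q)\subset\mathbb Q\cdot E^\pm$ with the restricted (cycle) pairing, $\mathrm H^1(\Gamma)=\mathrm{Hom}(\mathrm H_1(\Gamma),\mathbb Q)$. The higher cycle pairing $\int_\gamma\omega_1\cdots\omega_n$ for $\omega_i\in\mathrm H_1(\Gamma)$ is defined by: for the constant path, $1$ if $n=0$ and $0$ otherwise; for an edge, $\int_e\omega_1\cdots\omega_n=\frac1{n!}\prod_i\int_e\omega_i$; and $\int_{e\gamma}\omega_1\cdots\omega_n=\sum_{i=0}^n\int_e\omega_{i+1}\cdots\omega_n\cdot\int_\gamma\omega_1\cdots\omega_i$ when $s(e)=t(\gamma)$; extended bilinearly (it is well-defined on homotopy classes). $\bigoplus_{m\le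 n}\mathrm H_1(\Gamma)^{\otimes m}$ is the part of tensor length $\le n$ of the shuffle algebra; $\mathrm H^1(\Gamma)^{\otimes m}$ is dual to $\mathrm H_1(\Gamma)^{\otimes m}$. *)

theory Defs
  imports Complex_Main
begin

record ('v, 'e, 'd) graph =
  verts :: "'v set"
  edges :: "'e set"
  hedges :: "'d set"
  src :: "'e \<Rightarrow> 'v"
  hsrc :: "'d \<Rightarrow> 'v"
  einv :: "'e \<Rightarrow> 'e"
  len :: "'e \<Rightarrow> rat"

definition tgt :: "('v, 'e, 'd) graph \<Rightarrow> 'e \<Rightarrow> 'v" where
  "tgt G e = src G (einv G e)"

fun walk :: "('v, 'e, 'd) graph \<Rightarrow> 'v \<Rightarrow> 'e list \<Rightarrow> 'v \<Rightarrow> bool" where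
  "walk G x [] y \<longleftrightarrow> x \<in> verts G \<and> x = y"
| "walk G x (e # es) y \<longleftrightarrow> e \<in> edges G \<and> src G e = x \<and> x \<in> verts G \<and> walk G (tgt G e) es y"

definition connected_graph :: "('v, 'e, 'd) graph \<Rightarrow> bool" where
  "connected_graph G \<longleftrightarrow> (\<forall>x\<in>verts G. \<forall>y\<in>verts G. \<exists>es. walk G x es y)"

definition rat_metrised_graph :: "('v, 'e, 'd) graph \<Rightarrow> bool" where
  "rat_metrised_graph G \<longleftrightarrow>
     finite (verts G) \<and> finite (edges G) \<and> finite (hedges G) \<and> verts G \<noteq> {} \<and>
     src G ` edges G \<subseteq> verts G \<and> hsrc G ` hedges G \<subseteq> verts G \<and>
     (\<forall>e\<in>edges G. einv G e \<in> edges G \<and> einv G (einv G e) = e \<and> einv G e \<noteq> e) \<and>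
     connected_graph G \<and>
     (\<forall>e\<in>edges G. len G e > 0 \<and> len G (einv G e) = len G e)"

definition paths :: "('v, 'e, 'd) graph \<Rightarrow> 'v \<Rightarrow> 'v \<Rightarrow> ('v \<times> 'e list) set" where
  "paths G x y = {(x, es) | es. walk G x es y}"

definition hstep :: "('v, 'e, 'd) graph \<Rightarrow> 'v \<Rightarrow> 'v \<Rightarrow> (('v \<times> 'e list) \<times> ('v \<times> 'e list)) set" where
  "hstep G x y = {(p, q). p \<in> paths G x y \<and> q \<in> paths G x y \<and>
      (\<exists>a e b. e \<in> edges G \<and> snd p = a @ [e, einv G e] @ b \<and> snd q = a @ b)}"

definition homrel :: "('v, 'e, 'd) graph \<Rightarrow> 'v \<Rightarrow> 'v \<Rightarrow> (('v \<times> 'e list) \<times> ('v \<times> 'e list)) set" where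
  "homrel G x y = (hstep G x y \<union> (hstep G x y)\<inverse>)\<^sup>*"

definition pi1 :: "('v, 'e, 'd) graph \<Rightarrow> 'v \<Rightarrow> 'v \<Rightarrow> ('v \<times> 'e list) set set" where
  "pi1 G x y = paths G x y // homrel G x y"

definition hclass :: "('v, 'e, 'd) graph \<Rightarrow> 'v \<Rightarrow> 'v \<Rightarrow> ('v \<times> 'e list) \<Rightarrow> ('v \<times> 'e list) set" where
  "hclass G x y p = homrel G x y `` {p}"

definition rep :: "('v \<times> 'e list) set \<Rightarrow> ('v \<times> 'e list)" where
  "rep c = (SOME p. p \<in> c)"

definition supp :: "('a \<Rightarrow> rat) \<Rightarrow> 'a set" where
  "supp A = {c. A c \<noteq> 0}"

definition QPi :: "('v, 'e, 'd) graph \<Rightarrow> 'v \<Rightarrow> 'v \<Rightarrow> (('v \<times> 'e list) set \<Rightarrow> rat) set" where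
  "QPi G x y = {A. finite (supp A) \<and> supp A \<subseteq> pi1 G x y}"

text \<open>Composition of classes: \<open>a \<cdot> b\<close> means first \<open>b\<close> (from x to y), then \<open>a\<close> (from y to z).\<close>
definition ccomp :: "('v, 'e, 'd) graph \<Rightarrow> 'v \<Rightarrow> 'v \<Rightarrow> ('v \<times> 'e list) set \<Rightarrow> ('v \<times> 'e list) set \<Rightarrow> ('v \<times> 'e list) set" where
  "ccomp G x z a b = hclass G x z (x, snd (rep b) @ snd (rep a))"

definition amul :: "('v, 'e, 'd) graph \<Rightarrow> 'v \<Rightarrow> 'v \<Rightarrow> (('v \<times> 'e list) set \<Rightarrow> rat) \<Rightarrow> (('v \<times> 'e list) set \<Rightarrow> rat) \<Rightarrow> (('v \<times> 'e list) set \<Rightarrow> rat)" where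
  "amul G x z A B = (\<lambda>c. \<Sum>a\<in>supp A. \<Sum>b\<in>supp B. if ccomp G x z a b = c then A a * B b else 0)"

definition augJ :: "('v, 'e, 'd) graph \<Rightarrow> 'v \<Rightarrow> (('v \<times> 'e list) set \<Rightarrow> rat) set" where
  "augJ G u = {B \<in> QPi G u u. (\<Sum>c\<in>supp B. B c) = 0}"

inductive_set rspan :: "('a \<Rightarrow> rat) set \<Rightarrow> ('a \<Rightarrow> rat) set" for S where
  zero: "(\<lambda>_. 0) \<in> rspan S"
| add: "x \<in> S \<Longrightarrow> w \<in> rspan S \<Longrightarrow> (\<lambda>c. a * x c + w c) \<in> rspan S"

text \<open>\<open>Wfilt G u v k\<close> is \<open>W\<^sub>-\<^sub>k = \<rat>\<pi>\<^sub>1(\<Gamma>;u,v) \<cdot> J\<^sup>k\<close>.\<close>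
fun Wfilt :: "('v, 'e, 'd) graph \<Rightarrow> 'v \<Rightarrow> 'v \<Rightarrow> nat \<Rightarrow> (('v \<times> 'e list) set \<Rightarrow> rat) set" where
  "Wfilt G u v 0 = QPi G u v"
| "Wfilt G u v (Suc k) = rspan {amul G u v A B | A B. A \<in> Wfilt G u v k \<and> B \<in> augJ G u}"

text \<open>Elements of \<open>\<rat>\<cdot>E\<^sup>\<plusminus>\<close> as antisymmetric coefficient functions on E;
  \<open>H\<^sub>1(\<Gamma>)\<close> is the space of cycles.\<close>
definition H1 :: "('v, 'e, 'd) graph \<Rightarrow> ('e \<Rightarrow> rat) set" where
  "H1 G = {\<omega>. (\<forall>e. e \<notin> edges G \<longrightarrow> \<omega> e = 0) \<and>
              (\<forall>e\<in>edges G. \<omega> (einv G e) = - \<omega> e) \<and>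
              (\<forall>w\<in>verts G. (\<Sum>e\<in>{e\<in>edges G. src G e = w}. \<omega> e) = 0)}"

definition edge_int :: "('v, 'e, 'd) graph \<Rightarrow> 'e \<Rightarrow> ('e \<Rightarrow> rat) list \<Rightarrow> rat" where
  "edge_int G e ws = prod_list (map (\<lambda>\<omega>. len G e * \<omega> e) ws) / of_nat (fact (length ws))"

text \<open>Recursion on the path with its LAST edge first:
  \<open>\<integral>\<^sub>e\<^sub>\<gamma> \<omega>\<^sub>1\<cdots>\<omega>\<^sub>n = \<Sum>\<^sub>i \<integral>\<^sub>e \<omega>\<^sub>i\<^sub>+\<^sub>1\<cdots>\<omega>\<^sub>n \<cdot> \<integral>\<^sub>\<gamma> \<omega>\<^sub>1\<cdots>\<omega>\<^sub>i\<close>.\<close>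
fun hcp_rev :: "('v, 'e, 'd) graph \<Rightarrow> 'e list \<Rightarrow> ('e \<Rightarrow> rat) list \<Rightarrow> rat" where
  "hcp_rev G [] ws = (if ws = [] then 1 else 0)"
| "hcp_rev G (e # es) ws = (\<Sum>i\<le>length ws. edge_int G e (drop i ws) * hcp_rev G es (take i ws))"

definition hcp :: "('v, 'e, 'd) graph \<Rightarrow> ('v \<times> 'e list) \<Rightarrow> ('e \<Rightarrow> rat) list \<Rightarrow> rat" where
  "hcp G p ws = hcp_rev G (rev (snd p)) ws"

definition aint :: "('v, 'e, 'd) graph \<Rightarrow> (('v \<times> 'e list) set \<Rightarrow> rat) \<Rightarrow> ('e \<Rightarrow> rat) list \<Rightarrow> rat" where
  "aint G A ws = (\<Sum>c\<in>supp A. A c * hcp G (rep c) ws)"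

text \<open>Multilinear functionals on \<open>H\<^sup>m\<close> = linear functionals on \<open>H\<^sup>\<otimes>\<^sup>m\<close>.\<close>
definition multilin :: "('e \<Rightarrow> rat) set \<Rightarrow> nat \<Rightarrow> (('e \<Rightarrow> rat) list \<Rightarrow> rat) \<Rightarrow> bool" where
  "multilin H m \<phi> \<longleftrightarrow>
     (\<forall>ws i a b \<omega> \<omega>'. length ws = m \<and> set ws \<subseteq> H \<and> i < m \<and> \<omega> \<in> H \<and> \<omega>' \<in> H \<longrightarrow>
        \<phi> (ws[i := (\<lambda>e. a * \<omega> e + b * \<omega>' e)]) = a * \<phi> (ws[i := \<omega>]) + b * \<phi> (ws[i := \<omega>']))"

text \<open>Elements of the inverse limit: compatible sequences of lifts \<open>X n\<close> of elements of
  \<open>\<rat>\<pi>\<^sub>1/W\<^sub>-\<^sub>n\<^sub>-\<^sub>1\<close>.\<close>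
definition compat :: "('v, 'e, 'd) graph \<Rightarrow> 'v \<Rightarrow> 'v \<Rightarrow> (nat \<Rightarrow> ('v \<times> 'e list) set \<Rightarrow> rat) \<Rightarrow> bool" where
  "compat G u v X \<longleftrightarrow> (\<forall>n. X n \<in> QPi G u v \<and> (\<lambda>c. X (Suc n) c - X n c) \<in> Wfilt G u v (Suc n))"

end

theory Submission
  imports Defs
begin

(* By Chen's formula the pairing turns composition of paths into the deconcatenation product, so
   W_{-k} = Qpi(u,v) J^k pairs to zero with all words of length < k.  For the converse, fix paths
   from u to every vertex; the resulting edge loops generate pi_1(Gamma, u), and modulo J^2 the
   element c - 1 only depends on the cycle underlying c.  The lift zeta |-> sum_f zeta(f) (loop_f - 1)
   of a cycle zeta pairs with a cycle omega like the length inner product <zeta, omega>, which is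
   positive definite on H_1 because all lengths are positive.  Gram-Schmidt therefore yields an
   orthogonal basis b_1, ..., b_r of H_1, and the elements gamma_0 lift(b_{j_1}) ... lift(b_{j_k})
   span W_{-k} modulo W_{-k-1} and pair with the words b_{m_1} ... b_{m_k} by a diagonal matrix.
   This gives injectivity and surjectivity in each degree, and compatible sequences of
   representatives take care of the inverse limit. *)

section \<open>Deconcatenation and Chen's formula\<close>

definition deconc :: "(('e \<Rightarrow> rat) list \<Rightarrow> rat) \<Rightarrow> (('e \<Rightarrow> rat) list \<Rightarrow> rat) \<Rightarrow> ('e \<Rightarrow> rat) list \<Rightarrow> rat" where
  "deconc F H ws = (\<Sum>i\<le>length ws. F (drop i ws) * H (take i ws))"

definition counit :: "('e \<Rightarrow> rat) list \<Rightarrow> rat" where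
  "counit ws = (if ws = [] then 1 else 0)"

lemma deconc_counit_left [simp]:
  fixes H :: "('e \<Rightarrow> rat) list \<Rightarrow> rat"
  shows "deconc counit H = H"
proof
  fix ws :: "('e \<Rightarrow> rat) list"
  have "deconc counit H ws = (\<Sum>i\<in>{length ws}. H (take i ws))"
    unfolding deconc_def counit_def by (rule sum.mono_neutral_cong_right) auto
  then show "deconc counit H ws = H ws" by simp
qed

lemma deconc_counit_right [simp]:
  fixes F :: "('e \<Rightarrow> rat) list \<Rightarrow> rat"
  shows "deconc F counit = F"
proof
  fix ws :: "('e \<Rightarrow> rat) list"
  have "deconc F counit ws = (\<Sum>i\<in>{0}. F (drop i ws))"
    unfolding deconc_def counit_def by (rule sum.mono_neutral_cong_right) auto
  then show "deconc F counit ws = F ws" by simp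
qed

lemma sum_triangle_swap:
  "(\<Sum>i\<le>n. \<Sum>j\<le>i. g j (i - j)) = (\<Sum>j\<le>n. \<Sum>k\<le>n - j. g j k :: 'a :: comm_monoid_add)" for n :: nat
proof -
  have "(\<Sum>i\<le>n. \<Sum>j\<le>i. g j (i - j)) = (\<Sum>(j, k)\<in>{(j, k). j + k \<le> n}. g j k)"
    by (rule sum.triangle_reindex_eq[symmetric])
  also have "{(j, k). j + k \<le> n} = Sigma {..n} (\<lambda>j. {..n - j})" by auto
  finally show ?thesis by (simp add: sum.Sigma)
qed

lemma deconc_assoc:
  fixes F G H :: "('e \<Rightarrow> rat) list \<Rightarrow> rat"
  shows "deconc (deconc F G) H = deconc F (deconc G H)"
proof
  fix ws :: "('e \<Rightarrow> rat) list"
  let ?n = "length ws"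
  define g where "g j k = F (drop (j + k) ws) * G (take k (drop j ws)) * H (take j ws)" for j k
  have "deconc F (deconc G H) ws = (\<Sum>i\<le>?n. \<Sum>j\<le>i. g j (i - j))"
    unfolding deconc_def
    by (intro sum.cong refl) (simp add: g_def sum_distrib_left drop_take min_def mult.assoc)
  also have "\<dots> = (\<Sum>j\<le>?n. \<Sum>k\<le>?n - j. g j k)" by (rule sum_triangle_swap)
  also have "\<dots> = deconc (deconc F G) H ws"
    unfolding deconc_def by (intro sum.cong refl) (simp add: g_def sum_distrib_right add.commute)
  finally show "deconc (deconc F G) H ws = deconc F (deconc G H) ws" ..
qed

lemma deconc_cong:
  assumes "set ws \<subseteq> S"
    and "\<And>zs. set zs \<subseteq> S \<Longrightarrow> F zs = F' zs" and "\<And>zs. set zs \<subseteq> S \<Longrightarrow> H zs = H' zs"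
  shows "deconc F H ws = deconc F' H' ws"
  unfolding deconc_def
proof (intro sum.cong refl)
  fix i
  have "set (drop i ws) \<subseteq> S" "set (take i ws) \<subseteq> S"
    using assms(1) set_drop_subset set_take_subset by fastforce+
  then show "F (drop i ws) * H (take i ws) = F' (drop i ws) * H' (take i ws)" using assms by simp
qed

lemma deconc_sum:
  "deconc (\<lambda>zs. \<Sum>a\<in>S. p a * F a zs) (\<lambda>zs. \<Sum>b\<in>T. q b * H b zs) ws
     = (\<Sum>a\<in>S. \<Sum>b\<in>T. p a * q b * deconc (F a) (H b) ws)"
proof -
  have "deconc (\<lambda>zs. \<Sum>a\<in>S. p a * F a zs) (\<lambda>zs. \<Sum>b\<in>T. q b * H b zs) ws
      = (\<Sum>i\<le>length ws. \<Sum>a\<in>S. \<Sum>b\<in>T. p a * q b * (F a (drop i ws) * H b (take i ws)))"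
    unfolding deconc_def by (simp add: sum_product mult_ac)
  also have "\<dots> = (\<Sum>a\<in>S. \<Sum>b\<in>T. \<Sum>i\<le>length ws. p a * q b * (F a (drop i ws) * H b (take i ws)))"
    by (subst sum.swap) (subst (2) sum.swap, rule refl)
  finally show ?thesis by (simp add: deconc_def sum_distrib_left)
qed

lemma hcp_rev_Nil: "hcp_rev G [] = counit"
  by (simp add: fun_eq_iff counit_def)

lemma hcp_rev_Cons: "hcp_rev G (e # es) = deconc (edge_int G e) (hcp_rev G es)"
  by (simp add: fun_eq_iff deconc_def)

declare hcp_rev.simps(2) [simp del]

lemma hcp_rev_edge: "hcp_rev G [e] = edge_int G e"
  by (simp add: hcp_rev_Cons hcp_rev_Nil)

lemma hcp_rev_append: "hcp_rev G (xs @ ys) = deconc (hcp_rev G xs) (hcp_rev G ys)"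
  by (induction xs) (simp_all add: hcp_rev_Nil hcp_rev_Cons deconc_assoc)

lemma hcp_rev_Nil_word [simp]: "hcp_rev G es [] = 1"
  by (induction es) (simp_all add: hcp_rev_Nil hcp_rev_Cons deconc_def counit_def edge_int_def)

lemma hcp_Nil_word [simp]: "hcp G p [] = 1"
  by (simp add: hcp_def)

definition slot_linear :: "(('e \<Rightarrow> rat) list \<Rightarrow> rat) \<Rightarrow> bool" where
  "slot_linear F \<longleftrightarrow> (\<forall>ws i a b \<omega> \<omega>'. i < length ws \<longrightarrow>
     F (ws[i := (\<lambda>e. a * \<omega> e + b * \<omega>' e)]) = a * F (ws[i := \<omega>]) + b * F (ws[i := \<omega>']))"

lemma slot_linearD:
  "slot_linear F \<Longrightarrow> i < length ws \<Longrightarrow>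
     F (ws[i := (\<lambda>e. a * \<omega> e + b * \<omega>' e)]) = a * F (ws[i := \<omega>]) + b * F (ws[i := \<omega>'])"
  unfolding slot_linear_def by blast

lemma multilin_if_slot_linear: "slot_linear F \<Longrightarrow> multilin H m F"
  unfolding multilin_def by (auto intro: slot_linearD)

lemma slot_linear_counit: "slot_linear counit"
  unfolding slot_linear_def counit_def by (auto simp flip: length_0_conv)

lemma slot_linear_edge_int:
  fixes G :: "('v, 'e, 'd) graph"
  shows "slot_linear (edge_int G e)"
  unfolding slot_linear_def
proof (intro allI impI)
  fix ws :: "('e \<Rightarrow> rat) list" and i a b \<omega> \<omega>'
  assume i: "i < length ws"
  let ?f = "\<lambda>\<omega>::'e \<Rightarrow> rat. len G e * \<omega> e"
  let ?P = "prod_list (map ?f (take i ws))" and ?Q = "prod_list (map ?f (drop (Suc i) ws))"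
  have upd: "edge_int G e (ws[i := x]) = ?P * ?f x * ?Q / of_nat (fact (length ws))" for x
    unfolding edge_int_def length_list_update unfolding upd_conv_take_nth_drop[OF i]
    by (simp only: map_append list.map prod_list.append prod_list.Cons mult.assoc)
  show "edge_int G e (ws[i := (\<lambda>e. a * \<omega> e + b * \<omega>' e)])
      = a * edge_int G e (ws[i := \<omega>]) + b * edge_int G e (ws[i := \<omega>'])"
    unfolding upd by (simp add: algebra_simps add_divide_distrib)
qed

lemma slot_linear_deconc:
  fixes F H :: "('e \<Rightarrow> rat) list \<Rightarrow> rat"
  assumes F: "slot_linear F" and H: "slot_linear H"
  shows "slot_linear (deconc F H)"
  unfolding slot_linear_def
proof (intro allI impI)
  fix ws :: "('e \<Rightarrow> rat) list" and i a b \<omega> \<omega>'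
  assume i: "i < length ws"
  let ?T = "\<lambda>x j. F (drop j (ws[i := x])) * H (take j (ws[i := x]))"
  have "?T (\<lambda>e. a * \<omega> e + b * \<omega>' e) j = a * ?T \<omega> j + b * ?T \<omega>' j" if "j \<le> length ws" for j
  proof (cases "i < j")
    case True
    then show ?thesis
      using slot_linearD[OF H, of i "take j ws"] that
      by (simp add: take_update_swap drop_update_cancel algebra_simps)
  next
    case False
    then show ?thesis
      using slot_linearD[OF F, of "i - j" "drop j ws"] i
      by (simp add: drop_update_swap take_update_cancel algebra_simps)
  qed
  then show "deconc F H (ws[i := (\<lambda>e. a * \<omega> e + b * \<omega>' e)])
      = a * deconc F H (ws[i := \<omega>]) + b * deconc F H (ws[i := \<omega>'])"
    by (simp add: deconc_def sum.distrib sum_distrib_left)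
qed

lemma slot_linear_hcp_rev: "slot_linear (hcp_rev G es)"
  by (induction es)
    (simp_all add: hcp_rev_Nil hcp_rev_Cons slot_linear_counit slot_linear_deconc slot_linear_edge_int)

lemma slot_linear_sum:
  "(\<And>c. c \<in> S \<Longrightarrow> slot_linear (F c)) \<Longrightarrow> slot_linear (\<lambda>ws. \<Sum>c\<in>S. w c * F c ws)"
  unfolding slot_linear_def by (simp add: sum.distrib sum_distrib_left algebra_simps)

lemma multilin_aint: "multilin H m (aint G A)"
  unfolding aint_def hcp_def
  by (intro multilin_if_slot_linear slot_linear_sum slot_linear_hcp_rev)

section \<open>Finitely supported rational functions and their subspaces\<close>

definition delta :: "'c \<Rightarrow> 'c \<Rightarrow> rat" where
  "delta a = (\<lambda>x. if x = a then 1 else 0)"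

definition lin_ext :: "('c \<Rightarrow> rat) \<Rightarrow> ('c \<Rightarrow> rat) \<Rightarrow> rat" where
  "lin_ext g A = (\<Sum>c\<in>supp A. A c * g c)"

definition bilin_ext :: "('a \<Rightarrow> 'b \<Rightarrow> 'c) \<Rightarrow> ('a \<Rightarrow> rat) \<Rightarrow> ('b \<Rightarrow> rat) \<Rightarrow> 'c \<Rightarrow> rat" where
  "bilin_ext f A B = (\<lambda>c. \<Sum>a\<in>supp A. \<Sum>b\<in>supp B. if f a b = c then A a * B b else 0)"

lemma supp_zero [simp]: "supp (\<lambda>_. 0) = {}"
  by (simp add: supp_def)

lemma supp_delta [simp]: "supp (delta a) = {a}"
  by (auto simp: supp_def delta_def)

lemma supp_lincomb: "supp (\<lambda>c. s * X c + Y c) \<subseteq> supp X \<union> supp Y"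
  by (auto simp: supp_def)

lemma finite_supp_lincomb:
  "finite (supp X) \<Longrightarrow> finite (supp Y) \<Longrightarrow> finite (supp (\<lambda>c. s * X c + Y c))"
  by (rule finite_subset[OF supp_lincomb]) auto

lemma sum_supp_delta: "finite (supp B) \<Longrightarrow> (\<Sum>c\<in>supp B. B c * delta c x) = B x"
proof -
  assume fin: "finite (supp B)"
  have "(\<Sum>c\<in>supp B. B c * delta c x) = (\<Sum>c\<in>supp B. if c = x then B c else 0)"
    by (intro sum.cong refl) (auto simp: delta_def)
  also have "\<dots> = B x"
    using fin by (simp add: sum.delta supp_def)
  finally show ?thesis .
qed

lemma lin_ext_superset: "finite S \<Longrightarrow> supp A \<subseteq> S \<Longrightarrow> lin_ext g A = (\<Sum>c\<in>S. A c * g c)"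
  unfolding lin_ext_def by (rule sum.mono_neutral_left) (auto simp: supp_def)

lemma lin_ext_delta [simp]: "lin_ext g (delta a) = g a"
  unfolding lin_ext_def supp_delta by (simp add: delta_def)

lemma lin_ext_lincomb:
  assumes "finite (supp X)" "finite (supp Y)"
  shows "lin_ext g (\<lambda>c. s * X c + Y c) = s * lin_ext g X + lin_ext g Y"
proof -
  let ?S = "supp X \<union> supp Y"
  have "lin_ext g (\<lambda>c. s * X c + Y c) = (\<Sum>c\<in>?S. (s * X c + Y c) * g c)"
    by (rule lin_ext_superset) (use assms supp_lincomb[of s X Y] in auto)
  also have "\<dots> = s * (\<Sum>c\<in>?S. X c * g c) + (\<Sum>c\<in>?S. Y c * g c)"
    by (simp add: distrib_right sum.distrib sum_distrib_left mult.assoc)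
  also have "\<dots> = s * lin_ext g X + lin_ext g Y"
    using lin_ext_superset[of ?S X g] lin_ext_superset[of ?S Y g] assms by auto
  finally show ?thesis .
qed

lemma bilin_ext_superset:
  assumes "finite S" "supp A \<subseteq> S" "finite T" "supp B \<subseteq> T"
  shows "bilin_ext f A B c = (\<Sum>a\<in>S. \<Sum>b\<in>T. if f a b = c then A a * B b else 0)"
proof -
  have "bilin_ext f A B c = (\<Sum>a\<in>S. \<Sum>b\<in>supp B. if f a b = c then A a * B b else 0)"
    unfolding bilin_ext_def
    by (rule sum.mono_neutral_left) (use assms in \<open>auto simp: supp_def intro!: sum.neutral split: if_splits\<close>)
  also have "\<dots> = (\<Sum>a\<in>S. \<Sum>b\<in>T. if f a b = c then A a * B b else 0)"
    by (intro sum.cong refl sum.mono_neutral_left) (use assms in \<open>auto simp: supp_def\<close>)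
  finally show ?thesis .
qed

lemma supp_bilin_ext: "supp (bilin_ext f A B) \<subseteq> (\<lambda>(a, b). f a b) ` (supp A \<times> supp B)"
proof
  fix c assume c: "c \<in> supp (bilin_ext f A B)"
  show "c \<in> (\<lambda>(a, b). f a b) ` (supp A \<times> supp B)"
  proof (rule ccontr)
    assume "c \<notin> (\<lambda>(a, b). f a b) ` (supp A \<times> supp B)"
    then have "bilin_ext f A B c = 0"
      unfolding bilin_ext_def by (intro sum.neutral ballI) force
    then show False using c by (simp add: supp_def)
  qed
qed

lemma finite_supp_bilin_ext:
  "finite (supp A) \<Longrightarrow> finite (supp B) \<Longrightarrow> finite (supp (bilin_ext f A B))"
  by (rule finite_subset[OF supp_bilin_ext]) auto

lemma bilin_ext_zero_left [simp]: "bilin_ext f (\<lambda>_. 0) B = (\<lambda>_. 0)"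
  and bilin_ext_zero_right [simp]: "bilin_ext f A (\<lambda>_. 0) = (\<lambda>_. 0)"
  by (simp_all add: bilin_ext_def)

lemma bilin_ext_delta: "bilin_ext f (delta a) (delta b) = delta (f a b)"
  unfolding bilin_ext_def supp_delta by (simp add: delta_def fun_eq_iff)

lemma bilin_ext_lincomb_left:
  assumes "finite (supp X)" "finite (supp Y)" "finite (supp B)"
  shows "bilin_ext f (\<lambda>c. s * X c + Y c) B = (\<lambda>c. s * bilin_ext f X B c + bilin_ext f Y B c)"
proof
  fix c
  let ?S = "supp X \<union> supp Y"
  have "bilin_ext f (\<lambda>c. s * X c + Y c) B c
      = (\<Sum>a\<in>?S. \<Sum>b\<in>supp B. if f a b = c then (s * X a + Y a) * B b else 0)"
    by (rule bilin_ext_superset) (use assms supp_lincomb[of s X Y] in auto)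
  also have "\<dots> = (\<Sum>a\<in>?S. \<Sum>b\<in>supp B.
      s * (if f a b = c then X a * B b else 0) + (if f a b = c then Y a * B b else 0))"
    by (intro sum.cong refl) (simp add: algebra_simps)
  also have "\<dots> = s * (\<Sum>a\<in>?S. \<Sum>b\<in>supp B. if f a b = c then X a * B b else 0)
                + (\<Sum>a\<in>?S. \<Sum>b\<in>supp B. if f a b = c then Y a * B b else 0)"
    by (simp add: sum.distrib sum_distrib_left)
  also have "\<dots> = s * bilin_ext f X B c + bilin_ext f Y B c"
    using bilin_ext_superset[of ?S X "supp B" B f c] bilin_ext_superset[of ?S Y "supp B" B f c] assms
    by auto
  finally show "bilin_ext f (\<lambda>c. s * X c + Y c) B c = s * bilin_ext f X B c + bilin_ext f Y B c" .
qed

lemma bilin_ext_lincomb_right: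
  assumes "finite (supp X)" "finite (supp Y)" "finite (supp A)"
  shows "bilin_ext f A (\<lambda>c. s * X c + Y c) = (\<lambda>c. s * bilin_ext f A X c + bilin_ext f A Y c)"
proof
  fix c
  let ?S = "supp X \<union> supp Y"
  have "bilin_ext f A (\<lambda>c. s * X c + Y c) c
      = (\<Sum>a\<in>supp A. \<Sum>b\<in>?S. if f a b = c then A a * (s * X b + Y b) else 0)"
    by (rule bilin_ext_superset) (use assms supp_lincomb[of s X Y] in auto)
  also have "\<dots> = (\<Sum>a\<in>supp A. \<Sum>b\<in>?S.
      s * (if f a b = c then A a * X b else 0) + (if f a b = c then A a * Y b else 0))"
    by (intro sum.cong refl) (simp add: algebra_simps)
  also have "\<dots> = s * (\<Sum>a\<in>supp A. \<Sum>b\<in>?S. if f a b = c then A a * X b else 0)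
                + (\<Sum>a\<in>supp A. \<Sum>b\<in>?S. if f a b = c then A a * Y b else 0)"
    by (simp add: sum.distrib sum_distrib_left)
  also have "\<dots> = s * bilin_ext f A X c + bilin_ext f A Y c"
    using bilin_ext_superset[of "supp A" A ?S X f c] bilin_ext_superset[of "supp A" A ?S Y f c] assms
    by auto
  finally show "bilin_ext f A (\<lambda>c. s * X c + Y c) c = s * bilin_ext f A X c + bilin_ext f A Y c" .
qed

lemma lin_ext_bilin_ext:
  assumes "finite (supp A)" "finite (supp B)"
  shows "lin_ext g (bilin_ext f A B) = (\<Sum>a\<in>supp A. \<Sum>b\<in>supp B. A a * B b * g (f a b))"
proof -
  let ?D = "(\<lambda>(a, b). f a b) ` (supp A \<times> supp B)"
  have fD: "finite ?D" using assms by auto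
  have "lin_ext g (bilin_ext f A B) = (\<Sum>c\<in>?D. bilin_ext f A B c * g c)"
    by (rule lin_ext_superset[OF fD supp_bilin_ext])
  also have "\<dots> = (\<Sum>c\<in>?D. \<Sum>a\<in>supp A. \<Sum>b\<in>supp B. if f a b = c then A a * B b * g c else 0)"
    unfolding bilin_ext_def sum_distrib_right by (intro sum.cong refl) simp
  also have "\<dots> = (\<Sum>a\<in>supp A. \<Sum>b\<in>supp B. \<Sum>c\<in>?D. if f a b = c then A a * B b * g c else 0)"
    by (subst sum.swap) (subst (2) sum.swap, rule refl)
  also have "\<dots> = (\<Sum>a\<in>supp A. \<Sum>b\<in>supp B. A a * B b * g (f a b))"
    using fD by (intro sum.cong refl) (auto simp: sum.delta)
  finally show ?thesis .
qed

lemma bilin_ext_assoc: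
  assumes fin: "finite (supp A)" "finite (supp B)" "finite (supp C)"
    and assoc: "\<And>a b c. a \<in> supp A \<Longrightarrow> b \<in> supp B \<Longrightarrow> c \<in> supp C \<Longrightarrow> f1 (f2 a b) c = f3 a (f4 b c)"
  shows "bilin_ext f1 (bilin_ext f2 A B) C = bilin_ext f3 A (bilin_ext f4 B C)"
proof
  fix x
  have left: "bilin_ext f1 X C x = lin_ext (\<lambda>d. \<Sum>c\<in>supp C. if f1 d c = x then C c else 0) X" for X
    unfolding bilin_ext_def lin_ext_def
    by (intro sum.cong refl) (simp add: sum_distrib_left if_distrib mult.commute cong: if_cong)
  have right: "bilin_ext f3 A Y x = (\<Sum>a\<in>supp A. A a * lin_ext (\<lambda>d. if f3 a d = x then 1 else 0) Y)" for Y
    unfolding bilin_ext_def lin_ext_def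
    by (intro sum.cong refl) (simp add: sum_distrib_left if_distrib cong: if_cong)
  have "bilin_ext f1 (bilin_ext f2 A B) C x
      = (\<Sum>a\<in>supp A. \<Sum>b\<in>supp B. A a * B b * (\<Sum>c\<in>supp C. if f3 a (f4 b c) = x then C c else 0))"
    unfolding left lin_ext_bilin_ext[OF fin(1,2)] using assoc by (auto intro!: sum.cong)
  also have "\<dots> = (\<Sum>a\<in>supp A. A a * (\<Sum>b\<in>supp B. \<Sum>c\<in>supp C. B b * C c * (if f3 a (f4 b c) = x then 1 else 0)))"
    by (simp add: sum_distrib_left mult_ac if_distrib cong: if_cong)
  also have "\<dots> = bilin_ext f3 A (bilin_ext f4 B C) x"
    unfolding right lin_ext_bilin_ext[OF fin(2,3)] ..
  finally show "bilin_ext f1 (bilin_ext f2 A B) C x = bilin_ext f3 A (bilin_ext f4 B C) x" .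
qed

definition rat_subspace :: "('c \<Rightarrow> rat) set \<Rightarrow> bool" where
  "rat_subspace W \<longleftrightarrow> (\<lambda>_. 0) \<in> W \<and> (\<forall>X\<in>W. \<forall>Y\<in>W. \<forall>s. (\<lambda>c. s * X c + Y c) \<in> W)"

lemma rat_subspaceI:
  "(\<lambda>_. 0) \<in> W \<Longrightarrow> (\<And>X Y s. X \<in> W \<Longrightarrow> Y \<in> W \<Longrightarrow> (\<lambda>c. s * X c + Y c) \<in> W) \<Longrightarrow> rat_subspace W"
  unfolding rat_subspace_def by blast

context
  fixes W :: "('c \<Rightarrow> rat) set"
  assumes W: "rat_subspace W"
begin

lemma subspace_zero: "(\<lambda>_. 0) \<in> W"
  using W unfolding rat_subspace_def by blast

lemma subspace_lincomb: "X \<in> W \<Longrightarrow> Y \<in> W \<Longrightarrow> (\<lambda>c. s * X c + Y c) \<in> W"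
  using W unfolding rat_subspace_def by blast

lemma subspace_add: "X \<in> W \<Longrightarrow> Y \<in> W \<Longrightarrow> (\<lambda>c. X c + Y c) \<in> W"
  using subspace_lincomb[of X Y 1] by simp

lemma subspace_diff: "X \<in> W \<Longrightarrow> Y \<in> W \<Longrightarrow> (\<lambda>c. X c - Y c) \<in> W"
  using subspace_lincomb[of Y X "-1"] by simp

lemma subspace_scale: "X \<in> W \<Longrightarrow> (\<lambda>c. s * X c) \<in> W"
  using subspace_lincomb[OF _ subspace_zero, of X s] by simp

lemma subspace_sum: "finite I \<Longrightarrow> (\<And>i. i \<in> I \<Longrightarrow> X i \<in> W) \<Longrightarrow> (\<lambda>c. \<Sum>i\<in>I. w i * X i c) \<in> W"
proof (induction I rule: finite_induct)
  case empty then show ?case using subspace_zero by simp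
next
  case (insert x F)
  then show ?case using subspace_lincomb[of "X x" "\<lambda>c. \<Sum>i\<in>F. w i * X i c" "w x"] by simp
qed

lemma rspan_subset: "S \<subseteq> W \<Longrightarrow> rspan S \<subseteq> W"
proof
  fix x assume "x \<in> rspan S" "S \<subseteq> W"
  then show "x \<in> W"
    by (induction x rule: rspan.induct) (auto intro: subspace_zero subspace_lincomb)
qed

end

lemma rat_subspace_rspan: "rat_subspace (rspan S)"
proof (rule rat_subspaceI)
  fix X Y s assume "X \<in> rspan S" "Y \<in> rspan S"
  then show "(\<lambda>c. s * X c + Y c) \<in> rspan S"
  proof (induction X rule: rspan.induct)
    case (add x w a)
    have "(\<lambda>c. (s * a) * x c + (s * w c + Y c)) \<in> rspan S"
      using rspan.add[OF add.hyps(1) add.IH[OF add.prems]] .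
    then show ?case by (simp add: algebra_simps)
  qed simp
qed (rule rspan.zero)

lemma rspan_base: "x \<in> S \<Longrightarrow> x \<in> rspan S"
  using rspan.add[OF _ rspan.zero, of x S 1] by simp

lemma rspan_mono: "S \<subseteq> T \<Longrightarrow> rspan S \<subseteq> rspan T"
  by (rule rspan_subset[OF rat_subspace_rspan]) (auto intro: rspan_base)

lemma rat_subspace_finite_supp: "rat_subspace {A. finite (supp A)}"
  by (rule rat_subspaceI) (auto intro: finite_supp_lincomb)

lemma finite_supp_sum:
  "finite I \<Longrightarrow> (\<And>i. i \<in> I \<Longrightarrow> finite (supp (X i))) \<Longrightarrow> finite (supp (\<lambda>c. \<Sum>i\<in>I. w i * X i c))"
  using subspace_sum[OF rat_subspace_finite_supp, of I X w] by auto

lemma bilin_ext_sum_left: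
  assumes "finite I" "\<And>i. i \<in> I \<Longrightarrow> finite (supp (X i))" "finite (supp B)"
  shows "bilin_ext f (\<lambda>c. \<Sum>i\<in>I. w i * X i c) B = (\<lambda>c. \<Sum>i\<in>I. w i * bilin_ext f (X i) B c)"
  using assms
proof (induction I rule: finite_induct)
  case (insert a F)
  then show ?case
    by (simp add: bilin_ext_lincomb_left finite_supp_sum)
qed simp

lemma bilin_ext_sum_right:
  assumes "finite I" "\<And>i. i \<in> I \<Longrightarrow> finite (supp (X i))" "finite (supp A)"
  shows "bilin_ext f A (\<lambda>c. \<Sum>i\<in>I. w i * X i c) = (\<lambda>c. \<Sum>i\<in>I. w i * bilin_ext f A (X i) c)"
  using assms
proof (induction I rule: finite_induct)
  case (insert a F)
  then show ?case
    by (simp add: bilin_ext_lincomb_right finite_supp_sum)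
qed simp

section \<open>Walks, homotopy and the fundamental groupoid\<close>

definition rev_path :: "('v, 'e, 'd) graph \<Rightarrow> 'e list \<Rightarrow> 'e list" where
  "rev_path G t = rev (map (einv G) t)"

lemma rev_path_simps [simp]:
  "rev_path G [] = []" "rev_path G (e # t) = rev_path G t @ [einv G e]"
  "rev_path G (a @ b) = rev_path G b @ rev_path G a"
  by (simp_all add: rev_path_def)

lemma walk_append: "walk G x (p @ q) z \<longleftrightarrow> (\<exists>y. walk G x p y \<and> walk G y q z)"
proof (induction p arbitrary: x)
  case Nil
  show ?case by (cases q) auto
qed auto

lemma walk_appendI: "walk G x p y \<Longrightarrow> walk G y q z \<Longrightarrow> walk G x (p @ q) z"
  by (auto simp: walk_append)

lemma walk_verts: "walk G x p y \<Longrightarrow> x \<in> verts G \<and> y \<in> verts G"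
  by (induction p arbitrary: x) force+

lemma walk_edges: "walk G x p y \<Longrightarrow> set p \<subseteq> edges G"
  by (induction p arbitrary: x) auto

lemma mem_paths_iff: "p \<in> paths G x y \<longleftrightarrow> fst p = x \<and> walk G x (snd p) y"
  unfolding paths_def by (cases p) auto

lemma H1_outside_edges: "\<omega> \<in> H1 G \<Longrightarrow> e \<notin> edges G \<Longrightarrow> \<omega> e = 0"
  and H1_einv: "\<omega> \<in> H1 G \<Longrightarrow> e \<in> edges G \<Longrightarrow> \<omega> (einv G e) = - \<omega> e"
  and H1_vertex_sum: "\<omega> \<in> H1 G \<Longrightarrow> w \<in> verts G \<Longrightarrow> (\<Sum>e\<in>{e\<in>edges G. src G e = w}. \<omega> e) = 0"
  unfolding H1_def by blast+

lemma homrel_equiv: "equiv UNIV (homrel G x y)"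
proof -
  have "sym (homrel G x y)"
    unfolding homrel_def by (rule sym_rtrancl) (auto simp: sym_def)
  moreover have "trans (homrel G x y)"
    unfolding homrel_def by (rule trans_rtrancl)
  ultimately show ?thesis
    unfolding equiv_def refl_on_def homrel_def by auto
qed

lemma homrel_refl: "(p, p) \<in> homrel G x y"
  unfolding homrel_def by simp

lemma homrel_sym: "(p, q) \<in> homrel G x y \<Longrightarrow> (q, p) \<in> homrel G x y"
  using homrel_equiv[of G x y] unfolding equiv_def sym_def by blast

lemma homrel_trans: "(p, q) \<in> homrel G x y \<Longrightarrow> (q, r) \<in> homrel G x y \<Longrightarrow> (p, r) \<in> homrel G x y"
  using homrel_equiv[of G x y] unfolding equiv_def trans_def by blast

lemma homrel_paths: "(p, q) \<in> homrel G x y \<Longrightarrow> p \<in> paths G x y \<Longrightarrow> q \<in> paths G x y"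
  unfolding homrel_def by (induction rule: rtrancl_induct) (auto simp: hstep_def)

lemma hclass_eq_iff: "hclass G x y p = hclass G x y q \<longleftrightarrow> (p, q) \<in> homrel G x y"
  unfolding hclass_def using eq_equiv_class_iff[OF homrel_equiv[of G x y]] by blast

lemma mem_pi1_iff: "c \<in> pi1 G x y \<longleftrightarrow> (\<exists>p\<in>paths G x y. c = hclass G x y p)"
  unfolding pi1_def quotient_def hclass_def by blast

lemma hclass_in_pi1: "walk G x es y \<Longrightarrow> hclass G x y (x, es) \<in> pi1 G x y"
  unfolding mem_pi1_iff by (rule bexI[of _ "(x, es)"]) (simp_all add: mem_paths_iff)

lemma rep_hclass: "(p, rep (hclass G x y p)) \<in> homrel G x y"
proof -
  have "p \<in> hclass G x y p" unfolding hclass_def by (simp add: homrel_refl)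
  then have "rep (hclass G x y p) \<in> hclass G x y p" unfolding rep_def by (rule someI)
  then show ?thesis unfolding hclass_def by blast
qed

lemma rep_pi1:
  assumes "c \<in> pi1 G x y"
  shows "rep c = (x, snd (rep c))" "walk G x (snd (rep c)) y" "c = hclass G x y (x, snd (rep c))"
proof -
  obtain p where p: "p \<in> paths G x y" "c = hclass G x y p" using assms unfolding mem_pi1_iff by blast
  have r: "(p, rep c) \<in> homrel G x y" using rep_hclass p(2) by simp
  then have "rep c \<in> paths G x y" using homrel_paths[OF r p(1)] by blast
  then show "rep c = (x, snd (rep c))" "walk G x (snd (rep c)) y"
    by (auto simp: mem_paths_iff prod_eq_iff)
  with r p(2) show "c = hclass G x y (x, snd (rep c))" by (simp add: hclass_eq_iff)
qed

lemma hstep_context: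
  assumes "(p, q) \<in> hstep G y z" "walk G x r y" "walk G z s w"
  shows "((x, r @ snd p @ s), (x, r @ snd q @ s)) \<in> hstep G x w"
proof -
  obtain a e b where e: "e \<in> edges G" and p: "snd p = a @ [e, einv G e] @ b" and q: "snd q = a @ b"
    and pq: "walk G y (snd p) z" "walk G y (snd q) z"
    using assms(1) unfolding hstep_def by (auto simp: mem_paths_iff)
  have "\<exists>a' e' b'. e' \<in> edges G \<and> r @ snd p @ s = a' @ [e', einv G e'] @ b' \<and> r @ snd q @ s = a' @ b'"
    by (rule exI[of _ "r @ a"], rule exI[of _ e], rule exI[of _ "b @ s"]) (simp add: e p q)
  moreover have "walk G x (r @ snd p @ s) w" "walk G x (r @ snd q @ s) w"
    using pq assms(2,3) by (auto intro: walk_appendI)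
  ultimately show ?thesis
    unfolding hstep_def mem_paths_iff by simp
qed

lemma homrel_context:
  assumes "(p, q) \<in> homrel G y z" "walk G x r y" "walk G z s w"
  shows "((x, r @ snd p @ s), (x, r @ snd q @ s)) \<in> homrel G x w"
  using assms(1) unfolding homrel_def
proof (induction rule: rtrancl_induct)
  case (step q q')
  then have "((x, r @ snd q @ s), (x, r @ snd q' @ s)) \<in> hstep G x w \<union> (hstep G x w)\<inverse>"
    using hstep_context[OF _ assms(2,3)] by blast
  with step.IH show ?case by (rule rtrancl_into_rtrancl)
qed simp

lemma ccomp_hclass:
  assumes p: "walk G x p y" and q: "walk G y q z"
  shows "ccomp G x z (hclass G y z (y, q)) (hclass G x y (x, p)) = hclass G x z (x, p @ q)"
proof -
  let ?a = "hclass G y z (y, q)" and ?b = "hclass G x y (x, p)"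
  have b: "(rep ?b, (x, p)) \<in> homrel G x y" and a: "(rep ?a, (y, q)) \<in> homrel G y z"
    by (rule homrel_sym[OF rep_hclass])+
  have wa: "walk G y (snd (rep ?a)) z" using rep_pi1(2)[OF hclass_in_pi1[OF q]] .
  have x: "walk G x [] x" and z: "walk G z [] z" using walk_verts[OF p] walk_verts[OF q] by auto
  have "((x, snd (rep ?b) @ snd (rep ?a)), (x, p @ snd (rep ?a))) \<in> homrel G x z"
    using homrel_context[OF b x wa] by simp
  moreover have "((x, p @ snd (rep ?a)), (x, p @ q)) \<in> homrel G x z"
    using homrel_context[OF a p z] by simp
  ultimately show ?thesis
    unfolding ccomp_def hclass_eq_iff by (rule homrel_trans)
qed

lemma ccomp_in_pi1: "a \<in> pi1 G y z \<Longrightarrow> b \<in> pi1 G x y \<Longrightarrow> ccomp G x z a b \<in> pi1 G x z"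
  unfolding ccomp_def by (intro hclass_in_pi1 walk_appendI rep_pi1(2))

lemma ccomp_unit_right:
  assumes "c \<in> pi1 G x y"
  shows "ccomp G x y c (hclass G x x (x, [])) = c"
proof -
  have "walk G x [] x" using walk_verts[OF rep_pi1(2)[OF assms]] by simp
  then show ?thesis
    using ccomp_hclass[OF _ rep_pi1(2)[OF assms]] rep_pi1(3)[OF assms] by simp
qed

lemma ccomp_unit_left:
  assumes "c \<in> pi1 G x y"
  shows "ccomp G x y (hclass G y y (y, [])) c = c"
proof -
  have "walk G y [] y" using walk_verts[OF rep_pi1(2)[OF assms]] by simp
  then show ?thesis
    using ccomp_hclass[OF rep_pi1(2)[OF assms]] rep_pi1(3)[OF assms] by simp
qed

lemma ccomp_assoc:
  assumes "a \<in> pi1 G z w" "b \<in> pi1 G y z" "c \<in> pi1 G x y"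
  shows "ccomp G x w (ccomp G y w a b) c = ccomp G x w a (ccomp G x z b c)"
proof -
  obtain pa pb pc where pa: "walk G z pa w" "a = hclass G z w (z, pa)"
    and pb: "walk G y pb z" "b = hclass G y z (y, pb)" and pc: "walk G x pc y" "c = hclass G x y (x, pc)"
    using rep_pi1 assms by metis
  show ?thesis
    unfolding pa(2) pb(2) pc(2)
    by (simp add: ccomp_hclass pa(1) pb(1) pc(1) walk_appendI[OF pb(1) pa(1)] walk_appendI[OF pc(1) pb(1)])
qed

locale metrised_graph =
  fixes G :: "('v, 'e, 'd) graph"
  assumes metrised: "rat_metrised_graph G"
begin

lemma einv_in_edges: "e \<in> edges G \<Longrightarrow> einv G e \<in> edges G"
  and einv_einv [simp]: "e \<in> edges G \<Longrightarrow> einv G (einv G e) = e"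
  and len_einv [simp]: "e \<in> edges G \<Longrightarrow> len G (einv G e) = len G e"
  and len_pos: "e \<in> edges G \<Longrightarrow> len G e > 0"
  and src_in_verts: "e \<in> edges G \<Longrightarrow> src G e \<in> verts G"
  and finite_edges: "finite (edges G)"
  and finite_verts: "finite (verts G)"
  and connected: "x \<in> verts G \<Longrightarrow> y \<in> verts G \<Longrightarrow> \<exists>es. walk G x es y"
  using metrised unfolding rat_metrised_graph_def connected_graph_def by blast+

lemma tgt_in_verts: "e \<in> edges G \<Longrightarrow> tgt G e \<in> verts G"
  unfolding tgt_def using src_in_verts einv_in_edges by blast

lemma tgt_einv [simp]: "e \<in> edges G \<Longrightarrow> tgt G (einv G e) = src G e"
  unfolding tgt_def by simp

lemma walk_edge: "e \<in> edges G \<Longrightarrow> walk G (src G e) [e] (tgt G e)"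
  using src_in_verts tgt_in_verts by auto

lemma walk_rev_path: "walk G x t y \<Longrightarrow> walk G y (rev_path G t) x"
proof (induction t arbitrary: x)
  case (Cons e t)
  then have e: "e \<in> edges G" "walk G y (rev_path G t) (tgt G e)" "src G e = x" by auto
  have "walk G (tgt G e) [einv G e] (src G e)"
    using walk_edge[OF einv_in_edges[OF e(1)]] e(1) by (simp add: tgt_def[symmetric])
  then show ?case using e by (auto intro: walk_appendI)
qed simp

lemma rev_path_rev_path: "set t \<subseteq> edges G \<Longrightarrow> rev_path G (rev_path G t) = t"
  by (induction t) auto

lemma rev_path_cancel: "walk G x t y \<Longrightarrow> ((x, t @ rev_path G t), (x, [])) \<in> homrel G x x"
proof (induction t arbitrary: x)
  case Nil
  show ?case by (simp add: homrel_refl)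
next
  case (Cons e t)
  then have e: "e \<in> edges G" "src G e = x" "walk G (tgt G e) t y" by auto
  have w: "walk G x [e] (tgt G e)" "walk G (tgt G e) [einv G e] x"
    using walk_edge[of e] walk_edge[OF einv_in_edges[OF e(1)]] e by (simp_all add: tgt_def[symmetric])
  have "((x, [e] @ (t @ rev_path G t) @ [einv G e]), (x, [e] @ [] @ [einv G e])) \<in> homrel G x x"
    using homrel_context[OF Cons.IH[OF e(3)] w] by simp
  moreover have "((x, [] @ [e, einv G e] @ []), (x, [] @ [])) \<in> hstep G x x"
    unfolding hstep_def mem_paths_iff using e(1) w walk_appendI walk_verts[OF w(1)] by fastforce
  then have "((x, [e, einv G e]), (x, [])) \<in> homrel G x x"
    unfolding homrel_def by auto
  ultimately show ?case by (simp add: homrel_trans)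
qed

lemma rev_path_cancel_context:
  assumes "walk G x r y" "walk G y t z" "walk G y s w"
  shows "((x, r @ t @ rev_path G t @ s), (x, r @ s)) \<in> homrel G x w"
  using homrel_context[OF rev_path_cancel[OF assms(2)] assms(1,3)] by simp

lemma rev_path_cancel_context':
  assumes "walk G x r y" "walk G z t y" "walk G y s w"
  shows "((x, r @ rev_path G t @ t @ s), (x, r @ s)) \<in> homrel G x w"
  using rev_path_cancel_context[OF assms(1) walk_rev_path[OF assms(2)] assms(3)]
    rev_path_rev_path[OF walk_edges[OF assms(2)]] by simp

end

section \<open>Homotopy invariance and the group algebra\<close>

lemma edge_int_split:
  fixes G :: "('v, 'e, 'd) graph"
  assumes i: "i \<le> length ws"
  shows "edge_int G e (drop i ws) * edge_int G e (take i ws) = of_nat (length ws choose i) * edge_int G e ws"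
proof -
  define f where "f = (\<lambda>\<omega>::'e \<Rightarrow> rat. len G e * \<omega> e)"
  define Pd where "Pd = prod_list (map f (drop i ws))"
  define Pt where "Pt = prod_list (map f (take i ws))"
  have p: "prod_list (map f ws) = Pt * Pd"
    unfolding Pd_def Pt_def by (metis append_take_drop_id map_append prod_list.append)
  have c: "(of_nat (length ws choose i) :: rat) = fact (length ws) / (fact i * fact (length ws - i))"
    using binomial_fact[OF i] by simp
  have "edge_int G e (drop i ws) * edge_int G e (take i ws) = (Pd / fact (length ws - i)) * (Pt / fact i)"
    unfolding edge_int_def f_def[symmetric] Pd_def Pt_def using i by simp
  also have "\<dots> = fact (length ws) / (fact i * fact (length ws - i)) * ((Pt * Pd) / fact (length ws))"
    by (simp add: field_simps)
  finally show ?thesis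
    unfolding c edge_int_def f_def[symmetric] p by simp
qed

lemma QPi_finite_supp: "A \<in> QPi G x y \<Longrightarrow> finite (supp A)"
  by (simp add: QPi_def)

lemma rat_subspace_QPi: "rat_subspace (QPi G x y)"
proof (rule rat_subspaceI)
  fix X Y s assume "X \<in> QPi G x y" "Y \<in> QPi G x y"
  then show "(\<lambda>c. s * X c + Y c) \<in> QPi G x y"
    unfolding QPi_def using supp_lincomb[of s X Y] finite_supp_lincomb[of X Y s] by auto
qed (simp add: QPi_def)

lemma delta_QPi: "c \<in> pi1 G x y \<Longrightarrow> delta c \<in> QPi G x y"
  by (simp add: QPi_def)

lemma amul_eq_bilin_ext: "amul G x z = bilin_ext (ccomp G x z)"
  by (simp add: fun_eq_iff amul_def bilin_ext_def)

lemma aint_eq_lin_ext: "aint G A ws = lin_ext (\<lambda>c. hcp G (rep c) ws) A"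
  by (simp add: aint_def lin_ext_def)

lemma aint_lincomb:
  "finite (supp X) \<Longrightarrow> finite (supp Y) \<Longrightarrow> aint G (\<lambda>c. s * X c + Y c) ws = s * aint G X ws + aint G Y ws"
  unfolding aint_eq_lin_ext by (rule lin_ext_lincomb)

lemma aint_zero [simp]: "aint G (\<lambda>_. 0) ws = 0"
  by (simp add: aint_def)

lemma aint_diff:
  "finite (supp X) \<Longrightarrow> finite (supp Y) \<Longrightarrow> aint G (\<lambda>c. X c - Y c) ws = aint G X ws - aint G Y ws"
  using aint_lincomb[where X = Y and Y = X and s = "-1"] by simp

lemma aint_sum:
  "finite I \<Longrightarrow> (\<And>i. i \<in> I \<Longrightarrow> finite (supp (X i))) \<Longrightarrow>
     aint G (\<lambda>c. \<Sum>i\<in>I. w i * X i c) ws = (\<Sum>i\<in>I. w i * aint G (X i) ws)"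
proof (induction I rule: finite_induct)
  case (insert x F)
  then show ?case by (simp add: aint_lincomb finite_supp_sum)
qed simp

lemma aint_delta: "aint G (delta c) ws = hcp G (rep c) ws"
  by (simp add: aint_eq_lin_ext)

lemma aint_Nil_word: "aint G A [] = (\<Sum>c\<in>supp A. A c)"
  by (simp add: aint_def)

lemma amul_QPi:
  assumes A: "A \<in> QPi G y z" and B: "B \<in> QPi G x y"
  shows "amul G x z A B \<in> QPi G x z"
proof -
  have "supp (bilin_ext (ccomp G x z) A B) \<subseteq> pi1 G x z"
    using supp_bilin_ext[of "ccomp G x z" A B] A B ccomp_in_pi1 unfolding QPi_def by fastforce
  then show ?thesis
    using A B unfolding amul_eq_bilin_ext QPi_def by (auto intro: finite_supp_bilin_ext)
qed

lemma amul_assoc: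
  assumes "A \<in> QPi G y z" "B \<in> QPi G x y" "C \<in> QPi G w x"
  shows "amul G w z (amul G x z A B) C = amul G w z A (amul G w y B C)"
  unfolding amul_eq_bilin_ext
proof (rule bilin_ext_assoc)
  fix a b c assume "a \<in> supp A" "b \<in> supp B" "c \<in> supp C"
  then show "ccomp G w z (ccomp G x z a b) c = ccomp G w z a (ccomp G w y b c)"
    using assms ccomp_assoc[of a G y z b x c w] unfolding QPi_def by blast
qed (use assms in \<open>simp_all add: QPi_def\<close>)

context metrised_graph
begin

lemma edge_int_einv:
  assumes e: "e \<in> edges G" and ws: "set ws \<subseteq> H1 G"
  shows "edge_int G (einv G e) ws = (-1) ^ length ws * edge_int G e ws"
proof -
  have "prod_list (map (\<lambda>\<omega>. len G (einv G e) * \<omega> (einv G e)) ws)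
      = (-1) ^ length ws * prod_list (map (\<lambda>\<omega>. len G e * \<omega> e) ws)"
    using ws by (induction ws) (simp_all add: H1_einv e)
  then show ?thesis unfolding edge_int_def by simp
qed

text \<open>The pairing with a backtrack is an alternating binomial sum, a multiple of \<open>(1 - 1)\<^sup>n\<close>.\<close>
lemma hcp_rev_backtrack:
  assumes e: "e \<in> edges G" and ws: "set ws \<subseteq> H1 G"
  shows "hcp_rev G [einv G e, e] ws = counit ws"
proof -
  let ?n = "length ws"
  have "hcp_rev G [einv G e, e] ws = (\<Sum>i\<le>?n. edge_int G (einv G e) (drop i ws) * edge_int G e (take i ws))"
    by (simp only: hcp_rev_Cons[of G "einv G e" "[e]"] hcp_rev_edge deconc_def)
  also have "\<dots> = (\<Sum>i\<le>?n. of_nat (?n choose i) * 1 ^ i * (-1) ^ (?n - i)) * edge_int G e ws"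
    unfolding sum_distrib_right
  proof (intro sum.cong refl)
    fix i assume "i \<in> {..?n}"
    moreover have "set (drop i ws) \<subseteq> H1 G" using ws set_drop_subset by fastforce
    ultimately show "edge_int G (einv G e) (drop i ws) * edge_int G e (take i ws)
        = of_nat (?n choose i) * 1 ^ i * (-1) ^ (?n - i) * edge_int G e ws"
      using edge_int_einv[OF e] edge_int_split[of i ws G e] by simp
  qed
  also have "\<dots> = (1 + (-1)) ^ ?n * edge_int G e ws"
    by (simp only: binomial_ring)
  also have "\<dots> = counit ws"
    by (simp add: counit_def edge_int_def)
  finally show ?thesis .
qed

lemma hcp_hstep:
  assumes "(p, q) \<in> hstep G x y" "set ws \<subseteq> H1 G"
  shows "hcp G p ws = hcp G q ws"
proof -
  obtain a e b where e: "e \<in> edges G" and p: "snd p = a @ [e, einv G e] @ b" and q: "snd q = a @ b"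
    using assms(1) unfolding hstep_def by blast
  have cancel: "deconc (hcp_rev G [einv G e, e]) (hcp_rev G (rev a)) zs = hcp_rev G (rev a) zs"
    if "set zs \<subseteq> H1 G" for zs
  proof -
    have "deconc (hcp_rev G [einv G e, e]) (hcp_rev G (rev a)) zs = deconc counit (hcp_rev G (rev a)) zs"
      by (rule deconc_cong[OF that]) (simp_all add: hcp_rev_backtrack[OF e])
    then show ?thesis by simp
  qed
  have "hcp G p ws = deconc (hcp_rev G (rev b)) (deconc (hcp_rev G [einv G e, e]) (hcp_rev G (rev a))) ws"
    unfolding hcp_def p by (simp only: rev_append hcp_rev_append append_assoc) simp
  also have "\<dots> = deconc (hcp_rev G (rev b)) (hcp_rev G (rev a)) ws"
    by (rule deconc_cong[OF assms(2)]) (simp_all add: cancel)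
  also have "\<dots> = hcp G q ws"
    unfolding hcp_def q by (simp only: rev_append hcp_rev_append)
  finally show ?thesis .
qed

lemma hcp_homrel:
  assumes "(p, q) \<in> homrel G x y" "set ws \<subseteq> H1 G"
  shows "hcp G p ws = hcp G q ws"
  using assms(1) unfolding homrel_def
proof (induction rule: rtrancl_induct)
  case (step q r)
  then have "hcp G q ws = hcp G r ws"
    using hcp_hstep[OF _ assms(2), of q r] hcp_hstep[OF _ assms(2), of r q] by auto
  with step.IH show ?case by simp
qed simp

lemma hcp_rep_hclass: "set ws \<subseteq> H1 G \<Longrightarrow> hcp G (rep (hclass G x y p)) ws = hcp G p ws"
  using hcp_homrel[OF rep_hclass] by metis

lemma aint_amul:
  assumes "finite (supp A)" "finite (supp B)" "set ws \<subseteq> H1 G"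
  shows "aint G (amul G x z A B) ws = deconc (aint G A) (aint G B) ws"
proof -
  have "hcp G (rep (ccomp G x z a b)) ws = deconc (hcp G (rep a)) (hcp G (rep b)) ws" for a b
    unfolding ccomp_def hcp_rep_hclass[OF assms(3)] by (simp add: hcp_def[abs_def] hcp_rev_append)
  then have "aint G (amul G x z A B) ws
      = (\<Sum>a\<in>supp A. \<Sum>b\<in>supp B. A a * B b * deconc (hcp G (rep a)) (hcp G (rep b)) ws)"
    unfolding aint_eq_lin_ext amul_eq_bilin_ext lin_ext_bilin_ext[OF assms(1,2)] by simp
  also have "\<dots> = deconc (aint G A) (aint G B) ws"
    unfolding aint_def[abs_def] by (rule deconc_sum[symmetric])
  finally show ?thesis .
qed

end

section \<open>Cycles and the length inner product\<close>

lemma rat_subspace_H1: "rat_subspace (H1 G)"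
proof (rule rat_subspaceI)
  fix X Y s assume X: "X \<in> H1 G" and Y: "Y \<in> H1 G"
  have "(\<Sum>e\<in>{e\<in>edges G. src G e = w}. s * X e + Y e) = 0" if "w \<in> verts G" for w
    using H1_vertex_sum[OF X that] H1_vertex_sum[OF Y that]
    by (simp add: sum.distrib sum_distrib_left[symmetric])
  then show "(\<lambda>c. s * X c + Y c) \<in> H1 G"
    using X Y unfolding H1_def by auto
qed (simp add: H1_def)

definition edge_chain :: "('v, 'e, 'd) graph \<Rightarrow> 'e list \<Rightarrow> 'e \<Rightarrow> rat" where
  "edge_chain G es = (\<lambda>f. \<Sum>g\<leftarrow>es. (if f = g then 1 else 0) - (if f = einv G g then 1 else 0))"

definition len_inner :: "('v, 'e, 'd) graph \<Rightarrow> ('e \<Rightarrow> rat) \<Rightarrow> ('e \<Rightarrow> rat) \<Rightarrow> rat" where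
  "len_inner G \<zeta> \<omega> = (\<Sum>f\<in>edges G. len G f * \<zeta> f * \<omega> f)"

definition path_integral :: "('v, 'e, 'd) graph \<Rightarrow> ('e \<Rightarrow> rat) \<Rightarrow> 'e list \<Rightarrow> rat" where
  "path_integral G \<omega> es = (\<Sum>g\<leftarrow>es. len G g * \<omega> g)"

lemma edge_chain_append: "edge_chain G (a @ b) = (\<lambda>f. edge_chain G a f + edge_chain G b f)"
  by (simp add: edge_chain_def)

lemma len_inner_sym: "len_inner G \<zeta> \<omega> = len_inner G \<omega> \<zeta>"
  by (simp add: len_inner_def mult_ac)

lemma len_inner_sum_left:
  "len_inner G (\<lambda>e. \<Sum>j\<in>I. a j * b j e) y = (\<Sum>j\<in>I. a j * len_inner G (b j) y)"
  unfolding len_inner_def by (simp add: sum_distrib_left sum_distrib_right mult_ac sum.swap[of _ I])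

lemma len_inner_diff_left: "len_inner G (\<lambda>e. x e - z e) y = len_inner G x y - len_inner G z y"
  unfolding len_inner_def by (simp add: algebra_simps sum_subtractf)

lemma len_inner_lincomb_left:
  "len_inner G (\<lambda>e. a * x e + z e) y = a * len_inner G x y + len_inner G z y"
  unfolding len_inner_def by (simp add: algebra_simps sum.distrib sum_distrib_left)

lemma len_inner_zero_left [simp]: "len_inner G (\<lambda>_. 0) y = 0"
  by (simp add: len_inner_def)

lemma hcp_single_word: "hcp G p [\<omega>] = path_integral G \<omega> (snd p)"
proof -
  have "hcp_rev G es [\<omega>] = path_integral G \<omega> (rev es)" for es
    by (induction es) (simp_all add: path_integral_def hcp_rev_Nil hcp_rev_Cons deconc_def counit_def edge_int_def)
  then show ?thesis by (simp add: hcp_def)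
qed

text \<open>Along a walk every inner vertex is entered as often as it is left.\<close>
lemma walk_src_tgt_count:
  "walk G x es y \<Longrightarrow> (\<Sum>g\<leftarrow>es. (if src G g = v then 1 else 0) - (if tgt G g = v then 1 else 0))
     = (if x = v then 1 else 0) - (if y = v then (1::rat) else 0)"
  by (induction es arbitrary: x) auto

context metrised_graph
begin

lemma edge_chain_sum:
  "set es \<subseteq> edges G \<Longrightarrow> (\<Sum>f\<in>edges G. edge_chain G es f * X f) = (\<Sum>g\<leftarrow>es. X g - X (einv G g))"
proof (induction es)
  case (Cons g es)
  have g: "g \<in> edges G" "einv G g \<in> edges G" using Cons.prems einv_in_edges by auto
  have "edge_chain G (g # es) f * X f
      = (if f = g then X f else 0) - (if f = einv G g then X f else 0) + edge_chain G es f * X f" for f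
    by (simp add: edge_chain_def algebra_simps)
  then have "(\<Sum>f\<in>edges G. edge_chain G (g # es) f * X f)
      = (\<Sum>f\<in>edges G. if f = g then X f else 0) - (\<Sum>f\<in>edges G. if f = einv G g then X f else 0)
        + (\<Sum>f\<in>edges G. edge_chain G es f * X f)"
    by (simp add: sum.distrib sum_subtractf)
  then show ?case using Cons g finite_edges by (simp add: sum.delta')
qed (simp add: edge_chain_def)

lemma edge_chain_H1:
  assumes w: "walk G x es x"
  shows "edge_chain G es \<in> H1 G"
proof -
  have E: "set es \<subseteq> edges G" using walk_edges[OF w] .
  have "edge_chain G es f = 0" if "f \<notin> edges G" for f
  proof -
    have "\<forall>g\<in>set es. f \<noteq> g \<and> f \<noteq> einv G g" using E that einv_in_edges by blast
    then show ?thesis unfolding edge_chain_def by (induction es) auto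
  qed
  moreover have "edge_chain G es (einv G f) = - edge_chain G es f" if f: "f \<in> edges G" for f
  proof -
    have "\<forall>g\<in>set es. (einv G f = g \<longleftrightarrow> f = einv G g) \<and> (einv G f = einv G g \<longleftrightarrow> f = g)"
      using E f by (metis einv_einv subsetD)
    then show ?thesis unfolding edge_chain_def by (induction es) auto
  qed
  moreover have "(\<Sum>f\<in>{f\<in>edges G. src G f = v}. edge_chain G es f) = 0" for v
  proof -
    have "(\<Sum>f\<in>{f\<in>edges G. src G f = v}. edge_chain G es f)
        = (\<Sum>f\<in>edges G. edge_chain G es f * (if src G f = v then 1 else 0))"
      using finite_edges by (simp add: sum.inter_filter if_distrib cong: if_cong)
    also have "\<dots> = (\<Sum>g\<leftarrow>es. (if src G g = v then 1 else 0) - (if tgt G g = v then 1 else 0))"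
      using edge_chain_sum[OF E, of "\<lambda>f. if src G f = v then 1 else 0"] by (simp add: tgt_def)
    also have "\<dots> = 0"
      using walk_src_tgt_count[OF w] by simp
    finally show ?thesis .
  qed
  ultimately show ?thesis unfolding H1_def by blast
qed

lemma edge_chain_rev_path: "set t \<subseteq> edges G \<Longrightarrow> edge_chain G (rev_path G t) = (\<lambda>f. - edge_chain G t f)"
proof (induction t)
  case (Cons g t)
  have "edge_chain G [einv G g] = (\<lambda>f. - edge_chain G [g] f)"
    using Cons.prems by (auto simp: edge_chain_def fun_eq_iff dest: einv_einv)
  moreover have "edge_chain G (g # t) = (\<lambda>f. edge_chain G [g] f + edge_chain G t f)"
    by (simp add: edge_chain_def)
  ultimately show ?case using Cons by (simp add: edge_chain_append fun_eq_iff)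
qed (simp add: edge_chain_def)

lemma len_inner_self_eq_0:
  assumes z: "\<zeta> \<in> H1 G" and "len_inner G \<zeta> \<zeta> = 0"
  shows "\<zeta> = (\<lambda>_. 0)"
proof -
  have "\<forall>f\<in>edges G. len G f * \<zeta> f * \<zeta> f = 0"
    using assms(2) sum_nonneg_eq_0_iff[OF finite_edges, of "\<lambda>f. len G f * \<zeta> f * \<zeta> f"] len_pos
    unfolding len_inner_def by (simp add: mult.assoc less_imp_le)
  then show ?thesis using H1_outside_edges[OF z] len_pos by (metis mult_eq_0_iff order.irrefl)
qed

lemma H1_sum_src: "\<zeta> \<in> H1 G \<Longrightarrow> (\<Sum>f\<in>edges G. \<zeta> f * Q (src G f)) = (0::rat)"
proof -
  assume z: "\<zeta> \<in> H1 G"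
  have "(\<Sum>f\<in>edges G. \<zeta> f * Q (src G f)) = (\<Sum>w\<in>verts G. \<Sum>f\<in>{f\<in>edges G. src G f = w}. \<zeta> f * Q (src G f))"
    by (rule sum.group[symmetric]) (use finite_edges finite_verts src_in_verts in auto)
  also have "\<dots> = (\<Sum>w\<in>verts G. Q w * (\<Sum>f\<in>{f\<in>edges G. src G f = w}. \<zeta> f))"
    by (intro sum.cong refl) (simp add: sum_distrib_left mult.commute)
  also have "\<dots> = 0" using H1_vertex_sum[OF z] by simp
  finally show ?thesis .
qed

lemma H1_sum_tgt: "\<zeta> \<in> H1 G \<Longrightarrow> (\<Sum>f\<in>edges G. \<zeta> f * Q (tgt G f)) = (0::rat)"
proof -
  assume z: "\<zeta> \<in> H1 G"
  have "(\<Sum>f\<in>edges G. \<zeta> f * Q (tgt G f)) = (\<Sum>f\<in>edges G. \<zeta> (einv G f) * Q (tgt G (einv G f)))"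
    by (rule sum.reindex_bij_witness[where i="einv G" and j="einv G"]) (auto simp: einv_in_edges)
  also have "\<dots> = - (\<Sum>f\<in>edges G. \<zeta> f * Q (src G f))"
    using H1_einv[OF z] by (simp add: sum_negf[symmetric])
  finally show ?thesis using H1_sum_src[OF z] by simp
qed

lemma path_integral_rev_path:
  "set t \<subseteq> edges G \<Longrightarrow> \<omega> \<in> H1 G \<Longrightarrow> path_integral G \<omega> (rev_path G t) = - path_integral G \<omega> t"
  by (induction t) (auto simp: path_integral_def H1_einv)

end

definition orthogonal :: "('v, 'e, 'd) graph \<Rightarrow> ('e \<Rightarrow> rat) list \<Rightarrow> bool" where
  "orthogonal G bs \<longleftrightarrow> (\<forall>i<length bs. \<forall>j<length bs. i \<noteq> j \<longrightarrow> len_inner G (bs ! i) (bs ! j) = 0)"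

definition orth_proj :: "('v, 'e, 'd) graph \<Rightarrow> ('e \<Rightarrow> rat) list \<Rightarrow> ('e \<Rightarrow> rat) \<Rightarrow> 'e \<Rightarrow> rat" where
  "orth_proj G bs x = (\<lambda>e. \<Sum>j<length bs. (len_inner G x (bs ! j) / len_inner G (bs ! j) (bs ! j)) * (bs ! j) e)"

lemma len_inner_orth_proj:
  assumes "orthogonal G bs" "k < length bs"
  shows "len_inner G (orth_proj G bs x) (bs ! k)
    = (len_inner G x (bs ! k) / len_inner G (bs ! k) (bs ! k)) * len_inner G (bs ! k) (bs ! k)"
proof -
  have "len_inner G (orth_proj G bs x) (bs ! k)
      = (\<Sum>j<length bs. if j = k then (len_inner G x (bs ! k) / len_inner G (bs ! k) (bs ! k)) * len_inner G (bs ! k) (bs ! k) else 0)"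
    unfolding orth_proj_def len_inner_sum_left
    by (intro sum.cong refl) (use assms in \<open>auto simp: orthogonal_def\<close>)
  then show ?thesis using assms(2) by simp
qed

lemma orth_proj_lincomb:
  "orth_proj G bs (\<lambda>e. a * x e + w e) = (\<lambda>e. a * orth_proj G bs x e + orth_proj G bs w e)"
proof
  fix e
  have "(len_inner G (\<lambda>e. a * x e + w e) b / d) * b e = a * ((len_inner G x b / d) * b e) + (len_inner G w b / d) * b e"
    for b :: "'a \<Rightarrow> rat" and d
    unfolding len_inner_lincomb_left by (simp add: add_divide_distrib algebra_simps)
  then show "orth_proj G bs (\<lambda>e. a * x e + w e) e = a * orth_proj G bs x e + orth_proj G bs w e"
    by (simp add: orth_proj_def sum.distrib sum_distrib_left)
qed

lemma orthogonal_snoc: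
  assumes bs: "orthogonal G bs" and b: "\<And>k. k < length bs \<Longrightarrow> len_inner G b (bs ! k) = 0"
  shows "orthogonal G (bs @ [b])"
  unfolding orthogonal_def
proof (intro allI impI)
  fix i j assume ij: "i < length (bs @ [b])" "j < length (bs @ [b])" "i \<noteq> j"
  then consider "i < length bs" "j < length bs" | "i = length bs" "j < length bs" | "i < length bs" "j = length bs"
    by fastforce
  then show "len_inner G ((bs @ [b]) ! i) ((bs @ [b]) ! j) = 0"
  proof cases
    case 1
    then show ?thesis using bs ij(3) by (simp add: orthogonal_def nth_append)
  next
    case 2
    then show ?thesis using b by (simp add: nth_append)
  next
    case 3
    then show ?thesis using b[of i] len_inner_sym[of G "bs ! i" b] by (simp add: nth_append)
  qed
qed

context metrised_graph
begin

lemma len_inner_self_eq_0_left: "b \<in> H1 G \<Longrightarrow> len_inner G b b = 0 \<Longrightarrow> len_inner G x b = 0"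
  using len_inner_self_eq_0[of b] by (simp add: len_inner_def)

lemma orth_proj_eq:
  assumes bs: "set bs \<subseteq> H1 G" "orthogonal G bs" and x: "x \<in> rspan (set bs)"
  shows "orth_proj G bs x = x"
  using x
proof (induction x rule: rspan.induct)
  case zero
  show ?case by (simp add: orth_proj_def)
next
  case (add b w a)
  obtain k where k: "k < length bs" "b = bs ! k" using add.hyps(1) by (metis in_set_conv_nth)
  have "orth_proj G bs b = b"
  proof (cases "len_inner G b b = 0")
    case True
    then have "b = (\<lambda>_. 0)" using len_inner_self_eq_0 bs(1) add.hyps(1) by auto
    then show ?thesis by (simp add: orth_proj_def)
  next
    case False
    have "(len_inner G b (bs ! j) / len_inner G (bs ! j) (bs ! j)) * (bs ! j) e = (if j = k then b e else 0)"
      if "j < length bs" for j e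
      using that k False bs(2) unfolding orthogonal_def by auto
    then show ?thesis using k(1) by (simp add: orth_proj_def fun_eq_iff)
  qed
  then show ?case
    using add.IH by (simp add: orth_proj_lincomb)
qed

text \<open>Gram--Schmidt; it works over \<open>\<rat>\<close> because \<open>len_inner\<close> is positive definite on cycles.\<close>
lemma gram_schmidt:
  "set cs \<subseteq> H1 G \<Longrightarrow> \<exists>bs. set bs \<subseteq> H1 G \<and> orthogonal G bs \<and> set cs \<subseteq> rspan (set bs)"
proof (induction cs)
  case Nil
  show ?case by (rule exI[of _ "[]"]) (simp add: orthogonal_def)
next
  case (Cons c cs)
  then obtain bs where bs: "set bs \<subseteq> H1 G" "orthogonal G bs" "set cs \<subseteq> rspan (set bs)" by auto
  define b where "b = (\<lambda>e. c e - orth_proj G bs c e)"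
  let ?bs = "bs @ [b]"
  have c: "c \<in> H1 G" using Cons.prems by simp
  have "orth_proj G bs c \<in> H1 G"
    unfolding orth_proj_def using bs(1) by (intro subspace_sum[OF rat_subspace_H1]) auto
  then have b_H1: "b \<in> H1 G" unfolding b_def using subspace_diff[OF rat_subspace_H1 c] by blast
  have b_orth: "len_inner G b (bs ! k) = 0" if "k < length bs" for k
    using len_inner_orth_proj[OF bs(2) that, of c] len_inner_self_eq_0_left[of "bs ! k" c] bs(1) nth_mem[OF that]
    unfolding b_def len_inner_diff_left by (cases "len_inner G (bs ! k) (bs ! k) = 0") auto
  have "orthogonal G ?bs" by (rule orthogonal_snoc[OF bs(2) b_orth])
  moreover have span_mono: "rspan (set bs) \<subseteq> rspan (set ?bs)"
    by (rule rspan_mono) auto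
  moreover have "c \<in> rspan (set ?bs)"
  proof -
    have "orth_proj G bs c \<in> rspan (set ?bs)"
      unfolding orth_proj_def using span_mono
      by (intro subspace_sum[OF rat_subspace_rspan]) (auto intro: rspan_base)
    moreover have "b \<in> rspan (set ?bs)" by (auto intro: rspan_base)
    ultimately show ?thesis
      using subspace_add[OF rat_subspace_rspan] unfolding b_def by fastforce
  qed
  ultimately show ?case using bs b_H1 by (intro exI[of _ ?bs]) auto
qed

end

section \<open>The augmentation ideal and the weight filtration\<close>

locale based_metrised_graph = metrised_graph G for G :: "('v, 'e, 'd) graph" +
  fixes u v :: 'v
  assumes u_in_verts: "u \<in> verts G" and v_in_verts: "v \<in> verts G"
begin

definition unit_class :: "('v \<times> 'e list) set" where
  "unit_class = hclass G u u (u, [])"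

definition aug :: "('v \<times> 'e list) set \<Rightarrow> ('v \<times> 'e list) set \<Rightarrow> rat" where
  "aug x = (\<lambda>c. delta x c - delta unit_class c)"

definition augJ2 :: "(('v \<times> 'e list) set \<Rightarrow> rat) set" where
  "augJ2 = rspan {amul G u u B1 B2 | B1 B2. B1 \<in> augJ G u \<and> B2 \<in> augJ G u}"

lemma unit_class_in_pi1: "unit_class \<in> pi1 G u u"
  unfolding unit_class_def using u_in_verts by (simp add: hclass_in_pi1)

lemma augJ_QPi: "B \<in> augJ G u \<Longrightarrow> B \<in> QPi G u u"
  by (simp add: augJ_def)

lemma rat_subspace_augJ: "rat_subspace (augJ G u)"
proof (rule rat_subspaceI)
  fix X Y s assume X: "X \<in> augJ G u" and Y: "Y \<in> augJ G u"
  have fin: "finite (supp X)" "finite (supp Y)"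
    using QPi_finite_supp[OF augJ_QPi[OF X]] QPi_finite_supp[OF augJ_QPi[OF Y]] .
  have "(\<Sum>c\<in>supp (\<lambda>c. s * X c + Y c). s * X c + Y c) = lin_ext (\<lambda>_. 1) (\<lambda>c. s * X c + Y c)"
    by (simp add: lin_ext_def)
  also have "\<dots> = s * lin_ext (\<lambda>_. 1) X + lin_ext (\<lambda>_. 1) Y"
    by (rule lin_ext_lincomb[OF fin])
  also have "\<dots> = 0"
    using X Y by (simp add: augJ_def lin_ext_def)
  finally have "(\<Sum>c\<in>supp (\<lambda>c. s * X c + Y c). s * X c + Y c) = 0" .
  moreover have "(\<lambda>c. s * X c + Y c) \<in> QPi G u u"
    by (rule subspace_lincomb[OF rat_subspace_QPi augJ_QPi[OF X] augJ_QPi[OF Y]])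
  ultimately show "(\<lambda>c. s * X c + Y c) \<in> augJ G u"
    by (simp add: augJ_def)
next
  show "(\<lambda>_. 0) \<in> augJ G u"
    using subspace_zero[OF rat_subspace_QPi] by (simp add: augJ_def)
qed

lemma aug_in_augJ: "x \<in> pi1 G u u \<Longrightarrow> aug x \<in> augJ G u"
proof -
  assume x: "x \<in> pi1 G u u"
  have "(\<Sum>c\<in>supp (aug x). aug x c) = (\<Sum>c\<in>{x, unit_class}. aug x c)"
    by (rule sum.mono_neutral_left) (auto simp: supp_def aug_def delta_def)
  also have "\<dots> = 0"
    by (cases "x = unit_class") (auto simp: aug_def delta_def)
  finally show ?thesis
    using subspace_diff[OF rat_subspace_QPi delta_QPi[OF x] delta_QPi[OF unit_class_in_pi1]]
    by (simp add: augJ_def aug_def)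
qed

lemma aug_unit_class: "aug unit_class = (\<lambda>_. 0)"
  by (simp add: aug_def)

lemma rat_subspace_augJ2: "rat_subspace augJ2"
  unfolding augJ2_def by (rule rat_subspace_rspan)

lemma amul_in_augJ2: "B1 \<in> augJ G u \<Longrightarrow> B2 \<in> augJ G u \<Longrightarrow> amul G u u B1 B2 \<in> augJ2"
  unfolding augJ2_def by (rule rspan_base) blast

lemma augJ2_QPi: "augJ2 \<subseteq> QPi G u u"
  unfolding augJ2_def by (rule rspan_subset[OF rat_subspace_QPi]) (auto intro: amul_QPi augJ_QPi)

lemma Wfilt_QPi: "Wfilt G u v k \<subseteq> QPi G u v"
proof (induction k)
  case (Suc k)
  then show ?case
    by (simp only: Wfilt.simps) (rule rspan_subset[OF rat_subspace_QPi], auto intro: amul_QPi augJ_QPi)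
qed simp

lemma rat_subspace_Wfilt: "rat_subspace (Wfilt G u v k)"
  by (cases k) (simp_all add: rat_subspace_QPi rat_subspace_rspan)

lemma amul_in_Wfilt: "X \<in> Wfilt G u v k \<Longrightarrow> B \<in> augJ G u \<Longrightarrow> amul G u v X B \<in> Wfilt G u v (Suc k)"
  by simp (rule rspan_base, blast)

declare Wfilt.simps(2) [simp del]

lemma aint_augJ_Nil_word: "B \<in> augJ G u \<Longrightarrow> aint G B [] = 0"
  by (simp add: aint_Nil_word augJ_def)

lemma aint_Wfilt:
  "A \<in> Wfilt G u v k \<Longrightarrow> set ws \<subseteq> H1 G \<Longrightarrow> length ws < k \<Longrightarrow> aint G A ws = 0"
proof (induction k arbitrary: A ws)
  case (Suc k)
  let ?V = "{A \<in> QPi G u v. \<forall>ws. set ws \<subseteq> H1 G \<and> length ws < Suc k \<longrightarrow> aint G A ws = 0}"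
  have "rat_subspace ?V"
    by (rule rat_subspaceI)
      (auto simp: subspace_zero[OF rat_subspace_QPi] subspace_lincomb[OF rat_subspace_QPi]
         aint_lincomb QPi_finite_supp)
  moreover have "amul G u v X B \<in> ?V" if X: "X \<in> Wfilt G u v k" and B: "B \<in> augJ G u" for X B
  proof -
    have XQ: "X \<in> QPi G u v" and BQ: "B \<in> QPi G u u"
      using X B Wfilt_QPi augJ_QPi by blast+
    have "aint G X (drop i ws) * aint G B (take i ws) = 0"
      if ws: "set ws \<subseteq> H1 G" "length ws < Suc k" and i: "i \<le> length ws" for ws i
    proof (cases "i = 0")
      case False
      have "set (drop i ws) \<subseteq> H1 G" using ws(1) set_drop_subset by fastforce
      then show ?thesis using Suc.IH[OF X] False ws(2) i by simp
    qed (simp add: aint_augJ_Nil_word[OF B])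
    then show ?thesis
      using amul_QPi[OF XQ BQ]
      by (auto simp: aint_amul[OF QPi_finite_supp[OF XQ] QPi_finite_supp[OF BQ]] deconc_def
          intro!: sum.neutral)
  qed
  ultimately have "Wfilt G u v (Suc k) \<subseteq> ?V"
    unfolding Wfilt.simps by (intro rspan_subset) blast+
  then show ?case using Suc.prems by blast
qed simp

lemma amul_aug:
  assumes x: "x \<in> pi1 G u u" and y: "y \<in> pi1 G u u"
  shows "amul G u u (aug x) (aug y) = (\<lambda>c. aug (ccomp G u u x y) c - aug x c - aug y c)"
proof -
  have split: "aug z = (\<lambda>c. (-1) * delta unit_class c + delta z c)" for z
    by (simp add: aug_def)
  have right: "amul G u u (delta z) (aug y)
      = (\<lambda>c. (-1) * delta (ccomp G u u z unit_class) c + delta (ccomp G u u z y) c)" for z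
    unfolding split[of y] amul_eq_bilin_ext
    by (subst bilin_ext_lincomb_right) (simp_all add: bilin_ext_delta)
  have "amul G u u (aug x) (aug y)
      = (\<lambda>c. (-1) * amul G u u (delta unit_class) (aug y) c + amul G u u (delta x) (aug y) c)"
    unfolding split[of x] amul_eq_bilin_ext
    by (rule bilin_ext_lincomb_left) (simp_all add: QPi_finite_supp[OF augJ_QPi[OF aug_in_augJ[OF y]]])
  also have "\<dots> = (\<lambda>c. aug (ccomp G u u x y) c - aug x c - aug y c)"
    unfolding right
    using ccomp_unit_right[OF unit_class_in_pi1] ccomp_unit_left[OF y] ccomp_unit_right[OF x]
    by (simp add: aug_def fun_eq_iff flip: unit_class_def)
  finally show ?thesis .
qed

end

section \<open>Abelianisation: \<open>J/J\<^sup>2\<close> and cycles\<close>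

context based_metrised_graph
begin

definition base_path :: "'v \<Rightarrow> 'e list" where
  "base_path x = (if x = u then [] else SOME es. walk G u es x)"

definition edge_loop :: "'e \<Rightarrow> 'e list" where
  "edge_loop e = base_path (src G e) @ [e] @ rev_path G (base_path (tgt G e))"

definition edge_class :: "'e \<Rightarrow> ('v \<times> 'e list) set" where
  "edge_class e = hclass G u u (u, edge_loop e)"

definition lift :: "('e \<Rightarrow> rat) \<Rightarrow> ('v \<times> 'e list) set \<Rightarrow> rat" where
  "lift \<zeta> = (\<lambda>c. \<Sum>f\<in>edges G. \<zeta> f * aug (edge_class f) c)"

definition abel :: "(('v \<times> 'e list) set \<Rightarrow> rat) \<Rightarrow> 'e \<Rightarrow> rat" where
  "abel B = (\<lambda>f. \<Sum>c\<in>supp B. B c * (edge_chain G (snd (rep c)) f / 2))"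

lemma walk_base_path: "x \<in> verts G \<Longrightarrow> walk G u (base_path x) x"
proof (cases "x = u")
  case False
  assume x: "x \<in> verts G"
  obtain es where "walk G u es x" using connected[OF u_in_verts x] by blast
  then have "walk G u (SOME es. walk G u es x) x" by (rule someI)
  then show ?thesis unfolding base_path_def using False by simp
qed (simp add: base_path_def u_in_verts)

lemma base_path_edges: "x \<in> verts G \<Longrightarrow> set (base_path x) \<subseteq> edges G"
  using walk_edges[OF walk_base_path] .

lemma walk_edge_loop: "e \<in> edges G \<Longrightarrow> walk G u (edge_loop e) u"
  unfolding edge_loop_def
  by (intro walk_appendI[OF walk_base_path[OF src_in_verts]] walk_appendI[OF walk_edge]
      walk_rev_path[OF walk_base_path[OF tgt_in_verts]])

lemma walk_concat_edge_loops: "set es \<subseteq> edges G \<Longrightarrow> walk G u (concat (map edge_loop es)) u"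
  by (induction es) (auto simp: u_in_verts intro: walk_appendI walk_edge_loop)

lemma edge_loop_einv: "e \<in> edges G \<Longrightarrow> edge_loop (einv G e) = rev_path G (edge_loop e)"
  unfolding edge_loop_def
  using rev_path_rev_path[OF base_path_edges[OF tgt_in_verts]] by (simp add: tgt_def)

lemma edge_class_in_pi1: "e \<in> edges G \<Longrightarrow> edge_class e \<in> pi1 G u u"
  unfolding edge_class_def by (rule hclass_in_pi1[OF walk_edge_loop])

lemma homrel_concat_edge_loops:
  "walk G y es x \<Longrightarrow> ((u, base_path y @ es), (u, concat (map edge_loop es) @ base_path x)) \<in> homrel G u x"
proof (induction es arbitrary: y)
  case Nil
  then have "y = x" by simp
  then show ?case by (simp add: homrel_refl)
next
  case (Cons e es)
  then have e: "e \<in> edges G" "src G e = y" "walk G (tgt G e) es x" by auto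
  let ?t = "tgt G e"
  have wy: "walk G u (base_path y @ [e]) ?t"
    using walk_base_path[OF src_in_verts[OF e(1)]] walk_edge[OF e(1)] e(2) by (auto intro: walk_appendI)
  have cancel: "((u, (base_path y @ [e]) @ rev_path G (base_path ?t) @ base_path ?t @ es), (u, (base_path y @ [e]) @ es))
      \<in> homrel G u x"
    by (rule rev_path_cancel_context'[OF wy walk_base_path[OF tgt_in_verts[OF e(1)]] e(3)])
  have "((u, edge_loop e @ snd (u, base_path ?t @ es) @ []),
      (u, edge_loop e @ snd (u, concat (map edge_loop es) @ base_path x) @ [])) \<in> homrel G u x"
    by (rule homrel_context[OF Cons.IH[OF e(3)] walk_edge_loop[OF e(1)]]) (use walk_verts[OF e(3)] in simp)
  moreover have "edge_loop e @ base_path ?t @ es = (base_path y @ [e]) @ rev_path G (base_path ?t) @ base_path ?t @ es"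
    using e(2) by (simp add: edge_loop_def)
  ultimately show ?case
    using homrel_trans[OF homrel_sym[OF cancel]] by simp
qed

lemma pi1_eq_concat_edge_loops:
  assumes c: "c \<in> pi1 G u u"
  shows "c = hclass G u u (u, concat (map edge_loop (snd (rep c))))"
proof -
  have "((u, snd (rep c)), (u, concat (map edge_loop (snd (rep c))))) \<in> homrel G u u"
    using homrel_concat_edge_loops[OF rep_pi1(2)[OF c]] by (simp add: base_path_def)
  then have "hclass G u u (u, snd (rep c)) = hclass G u u (u, concat (map edge_loop (snd (rep c))))"
    by (simp only: hclass_eq_iff)
  with rep_pi1(3)[OF c] show ?thesis by simp
qed

lemma hclass_concat_edge_loops_Cons:
  "e \<in> edges G \<Longrightarrow> set es \<subseteq> edges G \<Longrightarrow> hclass G u u (u, concat (map edge_loop (e # es)))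
     = ccomp G u u (hclass G u u (u, concat (map edge_loop es))) (edge_class e)"
  unfolding edge_class_def by (simp add: ccomp_hclass walk_edge_loop walk_concat_edge_loops)

lemma aug_concat_edge_loops:
  "set es \<subseteq> edges G \<Longrightarrow>
     (\<lambda>c. aug (hclass G u u (u, concat (map edge_loop es))) c - (\<Sum>g\<leftarrow>es. aug (edge_class g) c)) \<in> augJ2"
proof (induction es)
  case Nil
  then show ?case using subspace_zero[OF rat_subspace_augJ2] by (simp add: aug_def unit_class_def)
next
  case (Cons e es)
  let ?R = "hclass G u u (u, concat (map edge_loop es))"
  have e: "e \<in> edges G" "set es \<subseteq> edges G" using Cons.prems by auto
  have R: "?R \<in> pi1 G u u" by (rule hclass_in_pi1[OF walk_concat_edge_loops[OF e(2)]])
  have "(\<lambda>c. aug (hclass G u u (u, concat (map edge_loop (e # es)))) c - (\<Sum>g\<leftarrow>e # es. aug (edge_class g) c))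
      = (\<lambda>c. (aug ?R c - (\<Sum>g\<leftarrow>es. aug (edge_class g) c)) + amul G u u (aug ?R) (aug (edge_class e)) c)"
    unfolding hclass_concat_edge_loops_Cons[OF e] amul_aug[OF R edge_class_in_pi1[OF e(1)]]
    by (simp add: fun_eq_iff)
  also have "\<dots> \<in> augJ2"
    using subspace_add[OF rat_subspace_augJ2 Cons.IH[OF e(2)]
        amul_in_augJ2[OF aug_in_augJ[OF R] aug_in_augJ[OF edge_class_in_pi1[OF e(1)]]]] .
  finally show ?case .
qed

lemma aug_edge_class_einv: "e \<in> edges G \<Longrightarrow> (\<lambda>c. aug (edge_class (einv G e)) c + aug (edge_class e) c) \<in> augJ2"
proof -
  assume e: "e \<in> edges G"
  have e': "einv G e \<in> edges G" using einv_in_edges[OF e] .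
  have "ccomp G u u (edge_class (einv G e)) (edge_class e) = hclass G u u (u, edge_loop e @ rev_path G (edge_loop e))"
    unfolding edge_class_def edge_loop_einv[OF e, symmetric]
    by (rule ccomp_hclass[OF walk_edge_loop[OF e] walk_edge_loop[OF e']])
  also have "\<dots> = unit_class"
    unfolding unit_class_def hclass_eq_iff by (rule rev_path_cancel[OF walk_edge_loop[OF e]])
  finally have "amul G u u (aug (edge_class (einv G e))) (aug (edge_class e))
      = (\<lambda>c. - aug (edge_class (einv G e)) c - aug (edge_class e) c)"
    by (simp add: amul_aug edge_class_in_pi1 e e' aug_unit_class)
  then have "(\<lambda>c. aug (edge_class (einv G e)) c + aug (edge_class e) c)
      = (\<lambda>c. (-1) * amul G u u (aug (edge_class (einv G e))) (aug (edge_class e)) c)"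
    by (simp add: fun_eq_iff)
  also have "\<dots> \<in> augJ2"
    by (intro subspace_scale[OF rat_subspace_augJ2] amul_in_augJ2 aug_in_augJ edge_class_in_pi1 e e')
  finally show ?thesis .
qed

lemma lift_in_augJ: "lift \<zeta> \<in> augJ G u"
  unfolding lift_def
  by (rule subspace_sum[OF rat_subspace_augJ finite_edges]) (intro aug_in_augJ edge_class_in_pi1)

lemma lift_QPi: "lift \<zeta> \<in> QPi G u u"
  using augJ_QPi[OF lift_in_augJ] .

lemma lift_sum: "finite I \<Longrightarrow> lift (\<lambda>f. \<Sum>i\<in>I. w i * z i f) = (\<lambda>c. \<Sum>i\<in>I. w i * lift (z i) c)"
  by (simp add: lift_def fun_eq_iff sum_distrib_left sum_distrib_right mult_ac sum.swap[of _ I])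

lemma lift_zero: "lift (\<lambda>_. 0) = (\<lambda>_. 0)"
  by (simp add: lift_def)

lemma lift_edge_chain:
  assumes "set es \<subseteq> edges G"
  shows "(\<lambda>c. lift (edge_chain G es) c - 2 * (\<Sum>g\<leftarrow>es. aug (edge_class g) c)) \<in> augJ2"
  using assms
proof (induction es)
  case Nil
  then show ?case using subspace_zero[OF rat_subspace_augJ2] by (simp add: lift_def edge_chain_def)
next
  case (Cons e es)
  have e: "e \<in> edges G" "set es \<subseteq> edges G" using Cons.prems by auto
  have "lift (edge_chain G (e # es)) c = (aug (edge_class e) c - aug (edge_class (einv G e)) c) + lift (edge_chain G es) c" for c
    unfolding lift_def edge_chain_sum[OF Cons.prems] edge_chain_sum[OF e(2)] by simp
  then have "(\<lambda>c. lift (edge_chain G (e # es)) c - 2 * (\<Sum>g\<leftarrow>e # es. aug (edge_class g) c))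
      = (\<lambda>c. (-1) * (aug (edge_class (einv G e)) c + aug (edge_class e) c)
             + (lift (edge_chain G es) c - 2 * (\<Sum>g\<leftarrow>es. aug (edge_class g) c)))"
    by (simp add: fun_eq_iff algebra_simps)
  also have "\<dots> \<in> augJ2"
    by (rule subspace_lincomb[OF rat_subspace_augJ2 aug_edge_class_einv[OF e(1)] Cons.IH[OF e(2)]])
  finally show ?case .
qed

text \<open>Modulo \<open>J\<^sup>2\<close>, \<open>c - 1\<close> only depends on the cycle underlying \<open>c\<close>; the factor \<open>1/2\<close> compensates
  for \<open>edge_chain\<close> counting both orientations of an edge.\<close>
lemma aug_minus_lift: "c \<in> pi1 G u u \<Longrightarrow> (\<lambda>x. aug c x - lift (\<lambda>f. edge_chain G (snd (rep c)) f / 2) x) \<in> augJ2"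
proof -
  assume c: "c \<in> pi1 G u u"
  let ?es = "snd (rep c)"
  let ?S = "\<lambda>x. \<Sum>g\<leftarrow>?es. aug (edge_class g) x"
  let ?C = "hclass G u u (u, concat (map edge_loop ?es))"
  have E: "set ?es \<subseteq> edges G" using walk_edges[OF rep_pi1(2)[OF c]] .
  have "lift (\<lambda>f. edge_chain G ?es f / 2) = (\<lambda>x. (1/2) * lift (edge_chain G ?es) x)"
    by (simp add: lift_def fun_eq_iff sum_distrib_left)
  then have "(\<lambda>x. aug c x - lift (\<lambda>f. edge_chain G ?es f / 2) x)
      = (\<lambda>x. (-1/2) * (lift (edge_chain G ?es) x - 2 * ?S x) + (aug ?C x - ?S x))"
    using pi1_eq_concat_edge_loops[OF c] by (simp add: fun_eq_iff algebra_simps)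
  also have "\<dots> \<in> augJ2"
    by (rule subspace_lincomb[OF rat_subspace_augJ2 lift_edge_chain[OF E] aug_concat_edge_loops[OF E]])
  finally show ?thesis .
qed

lemma augJ_eq_sum_aug: "B \<in> augJ G u \<Longrightarrow> B = (\<lambda>x. \<Sum>c\<in>supp B. B c * aug c x)"
proof
  fix x assume B: "B \<in> augJ G u"
  have "(\<Sum>c\<in>supp B. B c * aug c x) = (\<Sum>c\<in>supp B. B c * delta c x) - (\<Sum>c\<in>supp B. B c) * delta unit_class x"
    by (simp add: aug_def right_diff_distrib sum_subtractf sum_distrib_right)
  also have "\<dots> = B x"
    using B sum_supp_delta[OF QPi_finite_supp[OF augJ_QPi[OF B]]] by (simp add: augJ_def)
  finally show "B x = (\<Sum>c\<in>supp B. B c * aug c x)" ..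
qed

lemma abel_H1: "B \<in> augJ G u \<Longrightarrow> abel B \<in> H1 G"
proof -
  assume B: "B \<in> augJ G u"
  have "(\<lambda>f. edge_chain G (snd (rep c)) f / 2) \<in> H1 G" if "c \<in> supp B" for c
  proof -
    have c: "c \<in> pi1 G u u" using that B by (auto simp: augJ_def QPi_def)
    show ?thesis
      using subspace_scale[OF rat_subspace_H1 edge_chain_H1[OF rep_pi1(2)[OF c]], of "1/2"] by simp
  qed
  then show ?thesis
    unfolding abel_def by (rule subspace_sum[OF rat_subspace_H1 QPi_finite_supp[OF augJ_QPi[OF B]]])
qed

text \<open>The surjectivity half of \<open>J/J\<^sup>2 \<cong> H\<^sub>1\<close>.\<close>
lemma augJ_minus_lift_abel: "B \<in> augJ G u \<Longrightarrow> (\<lambda>x. B x - lift (abel B) x) \<in> augJ2"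
proof -
  assume B: "B \<in> augJ G u"
  have fin: "finite (supp B)" using QPi_finite_supp[OF augJ_QPi[OF B]] .
  have "(\<lambda>x. B x - lift (abel B) x)
      = (\<lambda>x. \<Sum>c\<in>supp B. B c * (aug c x - lift (\<lambda>f. edge_chain G (snd (rep c)) f / 2) x))"
    unfolding abel_def lift_sum[OF fin]
    by (subst (1) augJ_eq_sum_aug[OF B]) (simp add: right_diff_distrib sum_subtractf)
  also have "\<dots> \<in> augJ2"
    using B by (intro subspace_sum[OF rat_subspace_augJ2 fin] aug_minus_lift) (auto simp: augJ_def QPi_def)
  finally show ?thesis .
qed

lemma aint_aug: "x \<in> pi1 G u u \<Longrightarrow> aint G (aug x) ws = hcp G (rep x) ws - hcp G (rep unit_class) ws"
  unfolding aug_def by (simp add: aint_diff aint_delta)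

text \<open>The contributions of the base paths cancel because \<open>\<zeta>\<close> is a cycle.\<close>
lemma aint_lift:
  assumes z: "\<zeta> \<in> H1 G" and w: "\<omega> \<in> H1 G"
  shows "aint G (lift \<zeta>) [\<omega>] = len_inner G \<zeta> \<omega>"
proof -
  let ?P = "\<lambda>x. path_integral G \<omega> (base_path x)"
  have edge: "aint G (aug (edge_class f)) [\<omega>] = ?P (src G f) + len G f * \<omega> f - ?P (tgt G f)"
    if f: "f \<in> edges G" for f
  proof -
    have "aint G (aug (edge_class f)) [\<omega>] = hcp G (u, edge_loop f) [\<omega>] - hcp G (u, []) [\<omega>]"
      using aint_aug[OF edge_class_in_pi1[OF f]] hcp_rep_hclass[of "[\<omega>]"] w
      unfolding edge_class_def unit_class_def by simp
    also have "\<dots> = ?P (src G f) + len G f * \<omega> f - ?P (tgt G f)"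
      using path_integral_rev_path[OF base_path_edges[OF tgt_in_verts[OF f]] w]
      by (simp add: hcp_single_word edge_loop_def path_integral_def)
    finally show ?thesis .
  qed
  have "aint G (lift \<zeta>) [\<omega>] = (\<Sum>f\<in>edges G. \<zeta> f * aint G (aug (edge_class f)) [\<omega>])"
    unfolding lift_def
    by (rule aint_sum[OF finite_edges]) (intro QPi_finite_supp[OF augJ_QPi] aug_in_augJ edge_class_in_pi1)
  also have "\<dots> = (\<Sum>f\<in>edges G. \<zeta> f * ?P (src G f) + len G f * \<zeta> f * \<omega> f - \<zeta> f * ?P (tgt G f))"
  proof (intro sum.cong refl)
    fix f assume "f \<in> edges G"
    then show "\<zeta> f * aint G (aug (edge_class f)) [\<omega>] = \<zeta> f * ?P (src G f) + len G f * \<zeta> f * \<omega> f - \<zeta> f * ?P (tgt G f)"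
      unfolding edge[OF \<open>f \<in> edges G\<close>] by (simp add: algebra_simps)
  qed
  also have "\<dots> = len_inner G \<zeta> \<omega>"
    using H1_sum_src[OF z, of ?P] H1_sum_tgt[OF z, of ?P] by (simp add: len_inner_def sum.distrib sum_subtractf)
  finally show ?thesis .
qed

end

section \<open>An orthogonal basis of cycles\<close>

context based_metrised_graph
begin

lemma H1_eq_sum_edge_loops:
  assumes w: "\<omega> \<in> H1 G"
  shows "\<omega> = (\<lambda>g. \<Sum>f\<in>edges G. (\<omega> f / 2) * edge_chain G (edge_loop f) g)"
proof
  fix g
  have loop: "edge_chain G (edge_loop f) g
      = edge_chain G (base_path (src G f)) g + edge_chain G [f] g - edge_chain G (base_path (tgt G f)) g"
    if "f \<in> edges G" for f
    unfolding edge_loop_def edge_chain_append edge_chain_rev_path[OF base_path_edges[OF tgt_in_verts[OF that]]]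
    by simp
  then have "(\<Sum>f\<in>edges G. \<omega> f * edge_chain G (edge_loop f) g)
      = (\<Sum>f\<in>edges G. \<omega> f * edge_chain G (base_path (src G f)) g) + (\<Sum>f\<in>edges G. \<omega> f * edge_chain G [f] g)
        - (\<Sum>f\<in>edges G. \<omega> f * edge_chain G (base_path (tgt G f)) g)"
    by (simp add: loop sum.distrib sum_subtractf distrib_left right_diff_distrib)
  also have "\<dots> = (\<Sum>f\<in>edges G. \<omega> f * edge_chain G [f] g)"
    using H1_sum_src[OF w, of "\<lambda>x. edge_chain G (base_path x) g"] H1_sum_tgt[OF w, of "\<lambda>x. edge_chain G (base_path x) g"]
    by simp
  also have "\<dots> = 2 * \<omega> g"
  proof (cases "g \<in> edges G")
    case True
    have "\<omega> f * edge_chain G [f] g = (if f = g then \<omega> f else 0) - (if f = einv G g then \<omega> f else 0)"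
      if "f \<in> edges G" for f
      using that True by (auto simp: edge_chain_def dest: einv_einv)
    then have "(\<Sum>f\<in>edges G. \<omega> f * edge_chain G [f] g) = \<omega> g - \<omega> (einv G g)"
      using True einv_in_edges finite_edges by (simp add: sum_subtractf sum.delta')
    then show ?thesis using H1_einv[OF w True] by simp
  next
    case False
    have "\<omega> f * edge_chain G [f] g = 0" if "f \<in> edges G" for f
      using that False einv_in_edges by (auto simp: edge_chain_def)
    then have "(\<Sum>f\<in>edges G. \<omega> f * edge_chain G [f] g) = 0" by (intro sum.neutral) blast
    then show ?thesis using H1_outside_edges[OF w False] by simp
  qed
  finally show "\<omega> g = (\<Sum>f\<in>edges G. (\<omega> f / 2) * edge_chain G (edge_loop f) g)"
    by (simp add: sum_divide_distrib[symmetric] mult.commute[of "_ / 2"] times_divide_eq_left)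
qed

lemma exists_cycle_basis: "\<exists>bs. set bs \<subseteq> H1 G \<and> orthogonal G bs \<and> H1 G \<subseteq> rspan (set bs)"
proof -
  obtain es where es: "set es = edges G" using finite_list[OF finite_edges] by blast
  let ?cs = "map (\<lambda>f. edge_chain G (edge_loop f)) es"
  have "set ?cs \<subseteq> H1 G" using es edge_chain_H1[OF walk_edge_loop] by auto
  then obtain bs where bs: "set bs \<subseteq> H1 G" "orthogonal G bs" "set ?cs \<subseteq> rspan (set bs)"
    using gram_schmidt by blast
  have "\<omega> \<in> rspan (set bs)" if "\<omega> \<in> H1 G" for \<omega>
  proof -
    have "edge_chain G (edge_loop f) \<in> rspan (set bs)" if "f \<in> edges G" for f
      using bs(3) es that by auto
    then have "(\<lambda>g. \<Sum>f\<in>edges G. (\<omega> f / 2) * edge_chain G (edge_loop f) g) \<in> rspan (set bs)"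
      by (intro subspace_sum[OF rat_subspace_rspan finite_edges])
    then show ?thesis using H1_eq_sum_edge_loops[OF that] by simp
  qed
  with bs show ?thesis by blast
qed

text \<open>Gram--Schmidt may produce zero vectors, so \<open>cycle_basis\<close> spans \<open>H\<^sub>1\<close> but need not be
  linearly independent; zero entries contribute nothing below.\<close>
definition cycle_basis :: "('e \<Rightarrow> rat) list" where
  "cycle_basis = (SOME bs. set bs \<subseteq> H1 G \<and> orthogonal G bs \<and> H1 G \<subseteq> rspan (set bs))"

lemma cycle_basis: "set cycle_basis \<subseteq> H1 G" "orthogonal G cycle_basis" "H1 G \<subseteq> rspan (set cycle_basis)"
  using someI_ex[OF exists_cycle_basis] unfolding cycle_basis_def by blast+

end

section \<open>Words in the cycle basis\<close>

definition idx_words :: "nat \<Rightarrow> nat \<Rightarrow> nat list set" where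
  "idx_words r k = {ms. set ms \<subseteq> {..<r} \<and> length ms = k}"

lemma finite_idx_words: "finite (idx_words r k)"
  unfolding idx_words_def by (rule finite_lists_length_eq) simp

lemma idx_words_0: "idx_words r 0 = {[]}"
  by (auto simp: idx_words_def)

lemma sum_idx_words_Suc: "(\<Sum>ms\<in>idx_words r (Suc k). F ms) = (\<Sum>m<r. \<Sum>ms\<in>idx_words r k. F (m # ms))"
proof -
  have "idx_words r (Suc k) = (\<lambda>(m, ms). m # ms) ` ({..<r} \<times> idx_words r k)"
  proof
    show "idx_words r (Suc k) \<subseteq> (\<lambda>(m, ms). m # ms) ` ({..<r} \<times> idx_words r k)"
    proof
      fix xs assume "xs \<in> idx_words r (Suc k)"
      then obtain m ms where "xs = m # ms" "m < r" "ms \<in> idx_words r k"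
        unfolding idx_words_def by (cases xs) auto
      then show "xs \<in> (\<lambda>(m, ms). m # ms) ` ({..<r} \<times> idx_words r k)" by force
    qed
  qed (auto simp: idx_words_def)
  moreover have "inj_on (\<lambda>(m, ms). m # ms) ({..<r} \<times> idx_words r k)"
    by (auto simp: inj_on_def)
  ultimately have "(\<Sum>ms\<in>idx_words r (Suc k). F ms) = (\<Sum>p\<in>{..<r} \<times> idx_words r k. F (fst p # snd p))"
    using sum.reindex[of "\<lambda>(m, ms). m # ms" "{..<r} \<times> idx_words r k" F] by (simp add: case_prod_beta comp_def)
  also have "\<dots> = (\<Sum>m<r. \<Sum>ms\<in>idx_words r k. F (m # ms))"
    by (rule sum.cartesian_product[symmetric, unfolded case_prod_beta])
  finally show ?thesis .
qed

lemma multilin_diff: "multilin H m f \<Longrightarrow> multilin H m g \<Longrightarrow> multilin H m (\<lambda>ws. f ws - g ws)"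
  unfolding multilin_def by (simp add: algebra_simps)

lemma multilin_Cons: "multilin H (Suc k) f \<Longrightarrow> x \<in> H \<Longrightarrow> multilin H k (\<lambda>ws. f (x # ws))"
  unfolding multilin_def
proof (intro allI impI)
  fix ws i a b \<omega> \<omega>'
  assume "\<forall>ws i a b \<omega> \<omega>'. length ws = Suc k \<and> set ws \<subseteq> H \<and> i < Suc k \<and> \<omega> \<in> H \<and> \<omega>' \<in> H \<longrightarrow>
        f (ws[i := \<lambda>e. a * \<omega> e + b * \<omega>' e]) = a * f (ws[i := \<omega>]) + b * f (ws[i := \<omega>'])"
    and "x \<in> H" and "length ws = k \<and> set ws \<subseteq> H \<and> i < k \<and> \<omega> \<in> H \<and> \<omega>' \<in> H"
  then show "f (x # ws[i := \<lambda>e. a * \<omega> e + b * \<omega>' e]) = a * f (x # ws[i := \<omega>]) + b * f (x # ws[i := \<omega>'])"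
    by (drule_tac x = "x # ws" in spec, drule_tac x = "Suc i" in spec) simp
qed

lemma multilin_sum_head:
  fixes R :: nat
  assumes f: "multilin H (Suc k) f" and H: "rat_subspace H"
    and ws: "length ws = k" "set ws \<subseteq> H" and B: "\<And>m. m < R \<Longrightarrow> B m \<in> H"
  shows "f ((\<lambda>e. \<Sum>m<R. c m * B m e) # ws) = (\<Sum>m<R. c m * f (B m # ws))"
  using B
proof (induction R)
  case 0
  have "f (((\<lambda>_. 0) # ws)[0 := (\<lambda>e. 0 * (0::rat) + 0 * 0)])
      = 0 * f (((\<lambda>_. 0) # ws)[0 := (\<lambda>_. 0)]) + 0 * f (((\<lambda>_. 0) # ws)[0 := (\<lambda>_. 0)])"
    using f[unfolded multilin_def, rule_format, of "(\<lambda>_. 0) # ws" 0 "\<lambda>_. 0" "\<lambda>_. 0" 0 0]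
      subspace_zero[OF H] ws by simp
  then show ?case by simp
next
  case (Suc R)
  let ?s = "\<lambda>e. \<Sum>m<R. c m * B m e"
  have "?s \<in> H" by (rule subspace_sum[OF H]) (use Suc.prems in auto)
  then have "f ((?s # ws)[0 := (\<lambda>e. 1 * ?s e + c R * B R e)])
      = 1 * f ((?s # ws)[0 := ?s]) + c R * f ((?s # ws)[0 := B R])"
    using f[unfolded multilin_def, rule_format, of "?s # ws" 0 ?s "B R" 1 "c R"] Suc.prems ws by simp
  then show ?case using Suc by simp
qed

context based_metrised_graph
begin

abbreviation nbasis :: nat where
  "nbasis \<equiv> length cycle_basis"

definition basis_vec :: "nat \<Rightarrow> 'e \<Rightarrow> rat" where
  "basis_vec j = cycle_basis ! j"

definition basis_coeff :: "nat \<Rightarrow> ('e \<Rightarrow> rat) \<Rightarrow> rat" where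
  "basis_coeff j \<omega> = len_inner G \<omega> (basis_vec j) / len_inner G (basis_vec j) (basis_vec j)"

definition base_class :: "('v \<times> 'e list) set" where
  "base_class = hclass G u v (u, base_path v)"

fun word_elem :: "('e \<Rightarrow> rat) list \<Rightarrow> ('v \<times> 'e list) set \<Rightarrow> rat" where
  "word_elem [] = delta base_class"
| "word_elem (z # zs) = amul G u v (word_elem zs) (lift z)"

definition word_comb :: "nat \<Rightarrow> (nat list \<Rightarrow> rat) \<Rightarrow> ('v \<times> 'e list) set \<Rightarrow> rat" where
  "word_comb k y = (\<lambda>c. \<Sum>ms\<in>idx_words nbasis k. y ms * word_elem (map basis_vec ms) c)"

lemma basis_vec_H1: "j < nbasis \<Longrightarrow> basis_vec j \<in> H1 G"
  using cycle_basis(1) unfolding basis_vec_def by auto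

lemma map_basis_vec_H1: "ms \<in> idx_words nbasis k \<Longrightarrow> set (map basis_vec ms) \<subseteq> H1 G"
  unfolding idx_words_def using basis_vec_H1 by auto

lemma len_inner_basis_vec: "i < nbasis \<Longrightarrow> j < nbasis \<Longrightarrow> i \<noteq> j \<Longrightarrow> len_inner G (basis_vec i) (basis_vec j) = 0"
  using cycle_basis(2) unfolding orthogonal_def basis_vec_def by blast

lemma H1_eq_sum_basis: "\<omega> \<in> H1 G \<Longrightarrow> \<omega> = (\<lambda>e. \<Sum>j<nbasis. basis_coeff j \<omega> * basis_vec j e)"
  using orth_proj_eq[OF cycle_basis(1,2)] cycle_basis(3)
  unfolding orth_proj_def basis_coeff_def basis_vec_def by auto

lemma base_class_in_pi1: "base_class \<in> pi1 G u v"
  unfolding base_class_def by (rule hclass_in_pi1[OF walk_base_path[OF v_in_verts]])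

lemma word_elem_Wfilt: "word_elem zs \<in> Wfilt G u v (length zs)"
  by (induction zs) (simp_all add: delta_QPi[OF base_class_in_pi1] amul_in_Wfilt lift_in_augJ)

lemma word_elem_QPi: "word_elem zs \<in> QPi G u v"
  using word_elem_Wfilt Wfilt_QPi by blast

lemma word_elem_zero: "(\<lambda>_. 0) \<in> set zs \<Longrightarrow> word_elem zs = (\<lambda>_. 0)"
  by (induction zs) (auto simp: lift_zero amul_eq_bilin_ext)

text \<open>Only the splitting of \<open>ws\<close> after its first letter contributes, by \<open>aint_Wfilt\<close>.\<close>
lemma aint_word_elem:
  "set zs \<subseteq> H1 G \<Longrightarrow> set ws \<subseteq> H1 G \<Longrightarrow> length ws = length zs \<Longrightarrow>
    aint G (word_elem zs) ws = prod_list (map2 (len_inner G) zs ws)"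
proof (induction zs arbitrary: ws)
  case Nil
  then show ?case using base_class_in_pi1 by (simp add: aint_delta)
next
  case (Cons z zs)
  obtain w ws' where ws: "ws = w # ws'" using Cons.prems(3) by (cases ws) auto
  have w: "w \<in> H1 G" "set ws' \<subseteq> H1 G" "length ws' = length zs" using Cons.prems ws by auto
  have "aint G (word_elem zs) (drop i ws) * aint G (lift z) (take i ws) = 0"
    if "i \<le> length ws" "i \<noteq> 1" for i
  proof (cases "i = 0")
    case False
    have "set (drop i ws) \<subseteq> H1 G" using Cons.prems(2) set_drop_subset by fastforce
    then show ?thesis
      using aint_Wfilt[OF word_elem_Wfilt] False that w(3) ws by simp
  qed (simp add: aint_augJ_Nil_word[OF lift_in_augJ])
  then have "deconc (aint G (word_elem zs)) (aint G (lift z)) ws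
      = (\<Sum>i\<in>{1}. aint G (word_elem zs) (drop i ws) * aint G (lift z) (take i ws))"
    unfolding deconc_def by (intro sum.mono_neutral_right) (auto simp: ws)
  also have "\<dots> = prod_list (map2 (len_inner G) zs ws') * len_inner G z w"
    using Cons.IH[OF _ w(2,3)] Cons.prems(1) aint_lift[OF _ w(1)] by (simp add: ws)
  finally show ?case
    using aint_amul[OF QPi_finite_supp[OF word_elem_QPi] QPi_finite_supp[OF lift_QPi] Cons.prems(2)]
    by (simp add: ws)
qed

end

context based_metrised_graph
begin

definition basis_sqnorm :: "nat \<Rightarrow> rat" where
  "basis_sqnorm j = len_inner G (basis_vec j) (basis_vec j)"

lemma word_comb_Wfilt: "word_comb k y \<in> Wfilt G u v k"
  unfolding word_comb_def
proof (rule subspace_sum[OF rat_subspace_Wfilt finite_idx_words])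
  fix ms assume "ms \<in> idx_words nbasis k"
  then show "word_elem (map basis_vec ms) \<in> Wfilt G u v k"
    using word_elem_Wfilt[of "map basis_vec ms"] by (simp add: idx_words_def)
qed

lemma word_comb_QPi: "word_comb k y \<in> QPi G u v"
  using word_comb_Wfilt Wfilt_QPi by blast

lemma aint_word_comb: "aint G (word_comb k y) ws = (\<Sum>ms\<in>idx_words nbasis k. y ms * aint G (word_elem (map basis_vec ms)) ws)"
  unfolding word_comb_def
  by (rule aint_sum[OF finite_idx_words]) (rule QPi_finite_supp[OF word_elem_QPi])

lemma word_comb_lincomb: "word_comb k (\<lambda>ms. a * y ms + z ms) = (\<lambda>c. a * word_comb k y c + word_comb k z c)"
  by (simp add: word_comb_def fun_eq_iff algebra_simps sum.distrib sum_distrib_left)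

lemma aint_word_elem_basis:
  assumes ms: "ms \<in> idx_words nbasis k" and ms': "ms' \<in> idx_words nbasis k"
  shows "aint G (word_elem (map basis_vec ms)) (map basis_vec ms') = (if ms = ms' then prod_list (map basis_sqnorm ms) else 0)"
proof -
  have len: "length ms = length ms'" using ms ms' by (simp add: idx_words_def)
  have "prod_list (map2 (len_inner G) (map basis_vec ms) (map basis_vec ms')) = (if ms = ms' then prod_list (map basis_sqnorm ms) else 0)"
  proof (cases "ms = ms'")
    case True
    have "prod_list (map2 (len_inner G) (map basis_vec zs) (map basis_vec zs)) = prod_list (map basis_sqnorm zs)" for zs
      by (induction zs) (simp_all add: basis_sqnorm_def)
    with True show ?thesis by simp
  next
    case False
    then obtain j where j: "j < length ms" "ms ! j \<noteq> ms' ! j" using len nth_equalityI by blast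
    have "ms ! j \<in> set ms" "ms' ! j \<in> set ms'" using j len by simp_all
    then have "ms ! j < nbasis" "ms' ! j < nbasis" using ms ms' unfolding idx_words_def by auto
    then have "len_inner G (basis_vec (ms ! j)) (basis_vec (ms' ! j)) = 0" using len_inner_basis_vec j(2) by blast
    moreover have "map2 (len_inner G) (map basis_vec ms) (map basis_vec ms') ! j = len_inner G (basis_vec (ms ! j)) (basis_vec (ms' ! j))"
      using j len by simp
    moreover have "j < length (map2 (len_inner G) (map basis_vec ms) (map basis_vec ms'))" using j len by simp
    ultimately have "0 \<in> set (map2 (len_inner G) (map basis_vec ms) (map basis_vec ms'))" by (metis nth_mem)
    then show ?thesis using False by (simp add: prod_list_zero_iff)
  qed
  then show ?thesis using aint_word_elem map_basis_vec_H1[OF ms] map_basis_vec_H1[OF ms'] len by simp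
qed

lemma aint_word_comb_basis:
  assumes "ms \<in> idx_words nbasis k"
  shows "aint G (word_comb k y) (map basis_vec ms) = y ms * prod_list (map basis_sqnorm ms)"
  unfolding aint_word_comb using assms finite_idx_words
  by (simp add: aint_word_elem_basis if_distrib sum.delta cong: if_cong)

lemma word_elem_basis_eq_0:
  assumes ms: "ms \<in> idx_words nbasis k" and "prod_list (map basis_sqnorm ms) = 0"
  shows "word_elem (map basis_vec ms) = (\<lambda>_. 0)"
proof -
  obtain j where "j \<in> set ms" "basis_sqnorm j = 0" using assms(2) by (auto simp: prod_list_zero_iff)
  moreover have "j < nbasis" using ms \<open>j \<in> set ms\<close> by (auto simp: idx_words_def)
  ultimately have "basis_vec j = (\<lambda>_. 0)" using len_inner_self_eq_0 basis_vec_H1 unfolding basis_sqnorm_def by blast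
  then show ?thesis using \<open>j \<in> set ms\<close> by (intro word_elem_zero) force
qed

section \<open>The associated graded pieces of the weight filtration\<close>

lemma base_class_split: "c \<in> pi1 G u v \<Longrightarrow> \<exists>g\<in>pi1 G u u. ccomp G u v base_class g = c"
proof -
  assume c: "c \<in> pi1 G u v"
  let ?p = "snd (rep c) @ rev_path G (base_path v)"
  have wb: "walk G u (base_path v) v" by (rule walk_base_path[OF v_in_verts])
  have p: "walk G u ?p u" using walk_appendI[OF rep_pi1(2)[OF c] walk_rev_path[OF wb]] .
  have "ccomp G u v base_class (hclass G u u (u, ?p)) = hclass G u v (u, ?p @ base_path v)"
    unfolding base_class_def by (rule ccomp_hclass[OF p wb])
  also have "\<dots> = hclass G u v (u, snd (rep c))"
    unfolding hclass_eq_iff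
    using rev_path_cancel_context'[OF rep_pi1(2)[OF c] wb, of "[]" v] v_in_verts by simp
  also have "\<dots> = c" using rep_pi1(3)[OF c] by simp
  finally show ?thesis using hclass_in_pi1[OF p] by blast
qed

lemma amul_base_class_aug:
  assumes "x \<in> pi1 G u u"
  shows "amul G u v (delta base_class) (aug x) = (\<lambda>c. delta (ccomp G u v base_class x) c - delta base_class c)"
proof -
  have "amul G u v (delta base_class) (\<lambda>c. (-1) * delta unit_class c + delta x c)
      = (\<lambda>c. (-1) * delta (ccomp G u v base_class unit_class) c + delta (ccomp G u v base_class x) c)"
    unfolding amul_eq_bilin_ext by (subst bilin_ext_lincomb_right) (simp_all add: bilin_ext_delta)
  then show ?thesis
    using ccomp_unit_right[OF base_class_in_pi1] by (simp add: aug_def unit_class_def)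
qed

lemma QPi_approx_word_comb_0:
  assumes A: "A \<in> QPi G u v"
  shows "\<exists>y. (\<lambda>c. A c - word_comb 0 y c) \<in> Wfilt G u v (Suc 0)"
proof -
  have fin: "finite (supp A)" using QPi_finite_supp[OF A] .
  have "\<forall>c\<in>supp A. \<exists>g\<in>pi1 G u u. ccomp G u v base_class g = c"
    using A base_class_split unfolding QPi_def by blast
  then obtain g where g: "\<And>c. c \<in> supp A \<Longrightarrow> g c \<in> pi1 G u u \<and> ccomp G u v base_class (g c) = c"
    by metis
  let ?y = "\<lambda>_::nat list. \<Sum>c\<in>supp A. A c"
  have "(\<lambda>x. A x - word_comb 0 ?y x) = (\<lambda>x. \<Sum>c\<in>supp A. A c * amul G u v (delta base_class) (aug (g c)) x)"
  proof
    fix x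
    have "(\<Sum>c\<in>supp A. A c * amul G u v (delta base_class) (aug (g c)) x)
        = (\<Sum>c\<in>supp A. A c * (delta c x - delta base_class x))"
      by (intro sum.cong refl) (simp add: amul_base_class_aug g)
    also have "\<dots> = (\<Sum>c\<in>supp A. A c * delta c x) - (\<Sum>c\<in>supp A. A c) * delta base_class x"
      by (simp add: right_diff_distrib sum_subtractf sum_distrib_right)
    finally have "(\<Sum>c\<in>supp A. A c * amul G u v (delta base_class) (aug (g c)) x)
        = (\<Sum>c\<in>supp A. A c * delta c x) - (\<Sum>c\<in>supp A. A c) * delta base_class x" .
    then show "A x - word_comb 0 ?y x = (\<Sum>c\<in>supp A. A c * amul G u v (delta base_class) (aug (g c)) x)"
      using sum_supp_delta[OF fin] by (simp add: word_comb_def idx_words_0)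
  qed
  also have "\<dots> \<in> Wfilt G u v (Suc 0)"
    using g by (intro subspace_sum[OF rat_subspace_Wfilt fin] amul_in_Wfilt aug_in_augJ)
      (simp_all add: delta_QPi[OF base_class_in_pi1])
  finally show ?thesis by blast
qed

lemma amul_Wfilt_augJ2:
  assumes Z: "Z \<in> Wfilt G u v k" and B: "B \<in> augJ2"
  shows "amul G u v Z B \<in> Wfilt G u v (Suc (Suc k))"
proof -
  have ZQ: "Z \<in> QPi G u v" using Z Wfilt_QPi by blast
  let ?T = "{B \<in> QPi G u u. amul G u v Z B \<in> Wfilt G u v (Suc (Suc k))}"
  have "rat_subspace ?T"
  proof (rule rat_subspaceI)
    fix X Y s assume X: "X \<in> ?T" and Y: "Y \<in> ?T"
    then have "finite (supp X)" "finite (supp Y)" "finite (supp Z)"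
      using ZQ by (auto simp: QPi_def)
    then have "amul G u v Z (\<lambda>c. s * X c + Y c) = (\<lambda>c. s * amul G u v Z X c + amul G u v Z Y c)"
      unfolding amul_eq_bilin_ext by (rule bilin_ext_lincomb_right)
    then show "(\<lambda>c. s * X c + Y c) \<in> ?T"
      using X Y subspace_lincomb[OF rat_subspace_Wfilt] subspace_lincomb[OF rat_subspace_QPi] by auto
  qed (simp add: amul_eq_bilin_ext subspace_zero[OF rat_subspace_QPi] subspace_zero[OF rat_subspace_Wfilt])
  moreover have "amul G u u B1 B2 \<in> ?T" if "B1 \<in> augJ G u" "B2 \<in> augJ G u" for B1 B2
  proof -
    have "amul G u v Z (amul G u u B1 B2) = amul G u v (amul G u v Z B1) B2"
      by (rule amul_assoc[symmetric]) (use ZQ augJ_QPi that in auto)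
    moreover have "amul G u u B1 B2 \<in> QPi G u u"
      by (rule amul_QPi[OF augJ_QPi[OF that(1)] augJ_QPi[OF that(2)]])
    ultimately show ?thesis
      using amul_in_Wfilt[OF amul_in_Wfilt[OF Z that(1)] that(2)] by simp
  qed
  ultimately have "augJ2 \<subseteq> ?T" unfolding augJ2_def by (intro rspan_subset) blast+
  then show ?thesis using B by blast
qed

lemma amul_word_comb_lift:
  assumes z: "\<zeta> \<in> H1 G"
  shows "amul G u v (word_comb k y) (lift \<zeta>)
    = word_comb (Suc k) (\<lambda>ms. case ms of [] \<Rightarrow> 0 | j # ms' \<Rightarrow> basis_coeff j \<zeta> * y ms')"
proof -
  have "lift \<zeta> = (\<lambda>c. \<Sum>j<nbasis. basis_coeff j \<zeta> * lift (basis_vec j) c)"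
    by (subst H1_eq_sum_basis[OF z]) (rule lift_sum, simp)
  then have "amul G u v (word_comb k y) (lift \<zeta>)
      = (\<lambda>c. \<Sum>j<nbasis. \<Sum>ms\<in>idx_words nbasis k. basis_coeff j \<zeta> * y ms * amul G u v (word_elem (map basis_vec ms)) (lift (basis_vec j)) c)"
    unfolding amul_eq_bilin_ext word_comb_def
    by (simp add: bilin_ext_sum_right bilin_ext_sum_left QPi_finite_supp[OF lift_QPi] QPi_finite_supp[OF word_elem_QPi]
        finite_supp_sum finite_idx_words sum_distrib_left mult.assoc)
  then show ?thesis
    unfolding word_comb_def sum_idx_words_Suc by simp
qed

lemma rat_subspace_word_approx:
  "rat_subspace {A \<in> QPi G u v. \<exists>y. (\<lambda>c. A c - word_comb k y c) \<in> Wfilt G u v (Suc k)}"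
proof (rule rat_subspaceI)
  show "(\<lambda>_. 0) \<in> {A \<in> QPi G u v. \<exists>y. (\<lambda>c. A c - word_comb k y c) \<in> Wfilt G u v (Suc k)}"
    using subspace_zero[OF rat_subspace_QPi] subspace_zero[OF rat_subspace_Wfilt]
    by (auto simp: word_comb_def intro!: exI[of _ "\<lambda>_. 0"])
next
  fix X Z s
  assume "X \<in> {A \<in> QPi G u v. \<exists>y. (\<lambda>c. A c - word_comb k y c) \<in> Wfilt G u v (Suc k)}"
    and "Z \<in> {A \<in> QPi G u v. \<exists>y. (\<lambda>c. A c - word_comb k y c) \<in> Wfilt G u v (Suc k)}"
  then obtain y1 y2 where X: "X \<in> QPi G u v" "(\<lambda>c. X c - word_comb k y1 c) \<in> Wfilt G u v (Suc k)"
    and Z: "Z \<in> QPi G u v" "(\<lambda>c. Z c - word_comb k y2 c) \<in> Wfilt G u v (Suc k)" by blast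
  have "(\<lambda>c. (s * X c + Z c) - word_comb k (\<lambda>ms. s * y1 ms + y2 ms) c)
      = (\<lambda>c. s * (X c - word_comb k y1 c) + (Z c - word_comb k y2 c))"
    unfolding word_comb_lincomb by (simp add: algebra_simps)
  then have "(\<lambda>c. (s * X c + Z c) - word_comb k (\<lambda>ms. s * y1 ms + y2 ms) c) \<in> Wfilt G u v (Suc k)"
    using subspace_lincomb[OF rat_subspace_Wfilt X(2) Z(2)] by simp
  moreover have "(\<lambda>c. s * X c + Z c) \<in> QPi G u v"
    by (rule subspace_lincomb[OF rat_subspace_QPi X(1) Z(1)])
  ultimately show "(\<lambda>c. s * X c + Z c) \<in> {A \<in> QPi G u v. \<exists>y. (\<lambda>c. A c - word_comb k y c) \<in> Wfilt G u v (Suc k)}"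
    by blast
qed

text \<open>Splitting \<open>X = X' + word_comb k y\<close> and \<open>B = (B - lift (abel B)) + lift (abel B)\<close>, all cross terms
  but the last lie one step deeper in the filtration.\<close>
lemma amul_word_approx:
  assumes X: "X \<in> Wfilt G u v k" and y: "(\<lambda>c. X c - word_comb k y c) \<in> Wfilt G u v (Suc k)"
    and B: "B \<in> augJ G u"
  shows "\<exists>y'. (\<lambda>c. amul G u v X B c - word_comb (Suc k) y' c) \<in> Wfilt G u v (Suc (Suc k))"
proof -
  let ?X' = "\<lambda>c. X c - word_comb k y c" and ?B' = "\<lambda>c. B c - lift (abel B) c"
  define y' where "y' = (\<lambda>ms. case ms of [] \<Rightarrow> 0 | j # ms' \<Rightarrow> basis_coeff j (abel B) * y ms')"
  have fin: "finite (supp ?X')" "finite (supp (word_comb k y))" "finite (supp B)"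
    "finite (supp ?B')" "finite (supp (lift (abel B)))"
    using QPi_finite_supp[OF subsetD[OF Wfilt_QPi y]] QPi_finite_supp[OF word_comb_QPi]
      QPi_finite_supp[OF augJ_QPi[OF B]] QPi_finite_supp[OF subsetD[OF augJ2_QPi augJ_minus_lift_abel[OF B]]]
      QPi_finite_supp[OF lift_QPi] .
  have "amul G u v X B = amul G u v (\<lambda>c. 1 * ?X' c + word_comb k y c) B" by simp
  also have "\<dots> = (\<lambda>c. amul G u v ?X' B c + amul G u v (word_comb k y) (\<lambda>c. 1 * ?B' c + lift (abel B) c) c)"
    unfolding amul_eq_bilin_ext by (subst bilin_ext_lincomb_left) (simp_all add: fin)
  also have "\<dots> = (\<lambda>c. amul G u v ?X' B c + (amul G u v (word_comb k y) ?B' c + word_comb (Suc k) y' c))"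
    unfolding amul_eq_bilin_ext
    by (subst bilin_ext_lincomb_right) (simp_all add: fin y'_def abel_H1[OF B]
        amul_word_comb_lift[unfolded amul_eq_bilin_ext])
  finally have "(\<lambda>c. amul G u v X B c - word_comb (Suc k) y' c)
      = (\<lambda>c. amul G u v ?X' B c + amul G u v (word_comb k y) ?B' c)" by simp
  also have "\<dots> \<in> Wfilt G u v (Suc (Suc k))"
    by (rule subspace_add[OF rat_subspace_Wfilt amul_in_Wfilt[OF y B]
          amul_Wfilt_augJ2[OF word_comb_Wfilt augJ_minus_lift_abel[OF B]]])
  finally show ?thesis by blast
qed

lemma Wfilt_approx_word_comb: "A \<in> Wfilt G u v k \<Longrightarrow> \<exists>y. (\<lambda>c. A c - word_comb k y c) \<in> Wfilt G u v (Suc k)"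
proof (induction k arbitrary: A)
  case 0
  then show ?case using QPi_approx_word_comb_0 by simp
next
  case (Suc k)
  let ?T = "{A \<in> QPi G u v. \<exists>y. (\<lambda>c. A c - word_comb (Suc k) y c) \<in> Wfilt G u v (Suc (Suc k))}"
  have "amul G u v X B \<in> ?T" if "X \<in> Wfilt G u v k" "B \<in> augJ G u" for X B
    using amul_word_approx[OF that(1) _ that(2)] Suc.IH[OF that(1)]
      amul_QPi[OF subsetD[OF Wfilt_QPi that(1)] augJ_QPi[OF that(2)]] by blast
  then have "rspan {amul G u v X B | X B. X \<in> Wfilt G u v k \<and> B \<in> augJ G u} \<subseteq> ?T"
    by (intro rspan_subset[OF rat_subspace_word_approx]) blast
  then show ?case using Suc.prems unfolding Wfilt.simps(2)[of G u v k] by blast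
qed

end

section \<open>The duality\<close>

context based_metrised_graph
begin

lemma Wfilt_of_aint_vanish:
  assumes A: "A \<in> QPi G u v"
    and vanish: "\<And>m ws. m \<le> n \<Longrightarrow> length ws = m \<Longrightarrow> set ws \<subseteq> H1 G \<Longrightarrow> aint G A ws = 0"
  shows "A \<in> Wfilt G u v (Suc n)"
proof -
  have "A \<in> Wfilt G u v k" if "k \<le> Suc n" for k
    using that
  proof (induction k)
    case (Suc k)
    then have A_k: "A \<in> Wfilt G u v k" and kn: "k \<le> n" by auto
    obtain y where y: "(\<lambda>c. A c - word_comb k y c) \<in> Wfilt G u v (Suc k)"
      using Wfilt_approx_word_comb[OF A_k] by blast
    have "word_comb k y = (\<lambda>_. 0)"
      unfolding word_comb_def
    proof (intro ext sum.neutral ballI)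
      fix c ms assume ms: "ms \<in> idx_words nbasis k"
      have l: "length (map basis_vec ms) = k" using ms by (simp add: idx_words_def)
      have "aint G (\<lambda>c. A c - word_comb k y c) (map basis_vec ms) = aint G A (map basis_vec ms) - aint G (word_comb k y) (map basis_vec ms)"
        by (rule aint_diff[OF QPi_finite_supp[OF A] QPi_finite_supp[OF word_comb_QPi]])
      then have "aint G (word_comb k y) (map basis_vec ms)
          = aint G A (map basis_vec ms) - aint G (\<lambda>c. A c - word_comb k y c) (map basis_vec ms)"
        by simp
      also have "\<dots> = 0"
        using vanish[OF kn l map_basis_vec_H1[OF ms]] aint_Wfilt[OF y map_basis_vec_H1[OF ms]] l by simp
      finally have "y ms * prod_list (map basis_sqnorm ms) = 0"
        using aint_word_comb_basis[OF ms] by simp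
      then show "y ms * word_elem (map basis_vec ms) c = 0"
        using word_elem_basis_eq_0[OF ms] by auto
    qed
    then show ?case using y by simp
  qed (use A in simp)
  then show ?thesis by simp
qed

lemma Wfilt_Suc_iff_aint:
  assumes "A \<in> QPi G u v"
  shows "A \<in> Wfilt G u v (Suc n) \<longleftrightarrow> (\<forall>m\<le>n. \<forall>ws. length ws = m \<and> set ws \<subseteq> H1 G \<longrightarrow> aint G A ws = 0)"
  using aint_Wfilt[of A "Suc n"] Wfilt_of_aint_vanish[OF assms] by auto

lemma multilin_eq_sum_basis:
  "multilin (H1 G) k f \<Longrightarrow> length ws = k \<Longrightarrow> set ws \<subseteq> H1 G \<Longrightarrow>
    f ws = (\<Sum>ms\<in>idx_words nbasis k. prod_list (map2 basis_coeff ms ws) * f (map basis_vec ms))"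
proof (induction k arbitrary: f ws)
  case 0
  then show ?case by (simp add: idx_words_0)
next
  case (Suc k)
  obtain w ws' where ws: "ws = w # ws'" using Suc.prems(2) by (cases ws) auto
  have w: "w \<in> H1 G" "set ws' \<subseteq> H1 G" "length ws' = k" using Suc.prems ws by auto
  have "f ws = f ((\<lambda>e. \<Sum>j<nbasis. basis_coeff j w * basis_vec j e) # ws')"
    using H1_eq_sum_basis[OF w(1)] ws by simp
  also have "\<dots> = (\<Sum>j<nbasis. basis_coeff j w * f (basis_vec j # ws'))"
    by (rule multilin_sum_head[OF Suc.prems(1) rat_subspace_H1 w(3) w(2) basis_vec_H1])
  also have "\<dots> = (\<Sum>j<nbasis. basis_coeff j w * (\<Sum>ms\<in>idx_words nbasis k. prod_list (map2 basis_coeff ms ws') * f (basis_vec j # map basis_vec ms)))"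
    using Suc.IH[OF multilin_Cons[OF Suc.prems(1) basis_vec_H1] w(3,2)] by simp
  also have "\<dots> = (\<Sum>ms\<in>idx_words nbasis (Suc k). prod_list (map2 basis_coeff ms ws) * f (map basis_vec ms))"
    unfolding sum_idx_words_Suc ws by (simp add: sum_distrib_left mult.assoc)
  finally show ?case .
qed

lemma prod_basis_coeff:
  "length ms = length ws \<Longrightarrow>
    prod_list (map2 basis_coeff ms ws) = prod_list (map2 (len_inner G) (map basis_vec ms) ws) / prod_list (map basis_sqnorm ms)"
  by (induction ms ws rule: list_induct2) (simp_all add: basis_coeff_def basis_sqnorm_def len_inner_sym)

lemma aint_word_comb_multilin:
  assumes \<psi>: "multilin (H1 G) k \<psi>" and ws: "length ws = k" "set ws \<subseteq> H1 G"
  shows "aint G (word_comb k (\<lambda>ms. \<psi> (map basis_vec ms) / prod_list (map basis_sqnorm ms))) ws = \<psi> ws"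
proof -
  have "aint G (word_comb k (\<lambda>ms. \<psi> (map basis_vec ms) / prod_list (map basis_sqnorm ms))) ws
      = (\<Sum>ms\<in>idx_words nbasis k. prod_list (map2 basis_coeff ms ws) * \<psi> (map basis_vec ms))"
    unfolding aint_word_comb
  proof (intro sum.cong refl)
    fix ms assume ms: "ms \<in> idx_words nbasis k"
    then have "length ms = length ws" using ws by (simp add: idx_words_def)
    then show "\<psi> (map basis_vec ms) / prod_list (map basis_sqnorm ms) * aint G (word_elem (map basis_vec ms)) ws
        = prod_list (map2 basis_coeff ms ws) * \<psi> (map basis_vec ms)"
      using aint_word_elem[OF map_basis_vec_H1[OF ms] ws(2)] by (simp add: prod_basis_coeff)
  qed
  also have "\<dots> = \<psi> ws" using multilin_eq_sum_basis[OF \<psi> ws] by simp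
  finally show ?thesis .
qed

text \<open>Inductively on \<open>n\<close>: the defect in degree \<open>n + 1\<close> is corrected by a combination of words of
  length \<open>n + 1\<close>, which does not disturb the lower degrees.\<close>
lemma exists_QPi_aint:
  "(\<forall>m\<le>n. multilin (H1 G) m (\<phi> m)) \<Longrightarrow>
    \<exists>A\<in>QPi G u v. \<forall>m\<le>n. \<forall>ws. length ws = m \<and> set ws \<subseteq> H1 G \<longrightarrow> aint G A ws = \<phi> m ws"
proof (induction n)
  case 0
  let ?A = "\<lambda>c. \<phi> 0 [] * delta base_class c"
  have "?A \<in> QPi G u v" by (rule subspace_scale[OF rat_subspace_QPi delta_QPi[OF base_class_in_pi1]])
  moreover have "aint G ?A [] = \<phi> 0 []"
    using aint_lincomb[of "delta base_class" "\<lambda>_. 0" G "\<phi> 0 []" "[]"] by (simp add: aint_delta)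
  ultimately show ?case by auto
next
  case (Suc n)
  then obtain A where A: "A \<in> QPi G u v"
    and A_low: "\<And>m ws. m \<le> n \<Longrightarrow> length ws = m \<Longrightarrow> set ws \<subseteq> H1 G \<Longrightarrow> aint G A ws = \<phi> m ws"
    by auto
  let ?\<psi> = "\<lambda>ws. \<phi> (Suc n) ws - aint G A ws"
  have \<psi>: "multilin (H1 G) (Suc n) ?\<psi>"
    using Suc.prems by (intro multilin_diff multilin_aint) simp
  define y where "y = (\<lambda>ms. ?\<psi> (map basis_vec ms) / prod_list (map basis_sqnorm ms))"
  let ?A' = "\<lambda>c. word_comb (Suc n) y c + A c"
  have aint_A': "aint G ?A' ws = aint G (word_comb (Suc n) y) ws + aint G A ws" for ws
    using aint_lincomb[OF QPi_finite_supp[OF word_comb_QPi] QPi_finite_supp[OF A], where s = 1] by simp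
  have "aint G ?A' ws = \<phi> m ws" if m: "m \<le> Suc n" and ws: "length ws = m" "set ws \<subseteq> H1 G" for m ws
  proof (cases "m \<le> n")
    case True
    then show ?thesis
      using aint_A' A_low[OF True ws] aint_Wfilt[OF word_comb_Wfilt ws(2)] ws(1) by simp
  next
    case False
    then have "m = Suc n" using m by simp
    then show ?thesis using aint_A' aint_word_comb_multilin[OF \<psi>] ws unfolding y_def by simp
  qed
  then show ?case using subspace_add[OF rat_subspace_QPi word_comb_QPi A] by blast
qed

lemma compat_aint_stable:
  assumes X: "compat G u v X" and "m \<le> n" and ws: "length ws = m" "set ws \<subseteq> H1 G"
  shows "aint G (X n) ws = aint G (X m) ws"
  using assms(2)
proof (induction n rule: dec_induct)
  case (step k)
  have Q: "X (Suc k) \<in> QPi G u v" "X k \<in> QPi G u v"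
    and W: "(\<lambda>c. X (Suc k) c - X k c) \<in> Wfilt G u v (Suc k)"
    using X unfolding compat_def by blast+
  have "aint G (X (Suc k)) ws - aint G (X k) ws = aint G (\<lambda>c. X (Suc k) c - X k c) ws"
    by (rule aint_diff[OF QPi_finite_supp[OF Q(1)] QPi_finite_supp[OF Q(2)], symmetric])
  also have "\<dots> = 0"
    using aint_Wfilt[OF W ws(2)] ws(1) step.hyps(1) by simp
  finally show ?case using step.IH by simp
qed simp

lemma compat_diff_Wfilt:
  assumes X: "compat G u v X" and Y: "compat G u v Y"
    and XY: "\<forall>m ws. length ws = m \<and> set ws \<subseteq> H1 G \<longrightarrow> aint G (X m) ws = aint G (Y m) ws"
  shows "(\<lambda>c. X n c - Y n c) \<in> Wfilt G u v (Suc n)"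
proof (rule Wfilt_of_aint_vanish)
  have XQ: "X n \<in> QPi G u v" and YQ: "Y n \<in> QPi G u v" using X Y unfolding compat_def by blast+
  then show "(\<lambda>c. X n c - Y n c) \<in> QPi G u v" by (rule subspace_diff[OF rat_subspace_QPi])
  fix m ws assume m: "m \<le> n" and ws: "length ws = m" "set ws \<subseteq> H1 G"
  have "aint G (X n) ws = aint G (Y n) ws"
    using compat_aint_stable[OF X m ws] compat_aint_stable[OF Y m ws] XY ws by simp
  then show "aint G (\<lambda>c. X n c - Y n c) ws = 0"
    by (simp add: aint_diff[OF QPi_finite_supp[OF XQ] QPi_finite_supp[OF YQ]])
qed

lemma exists_compat:
  assumes \<phi>: "\<forall>m. multilin (H1 G) m (\<phi> m)"
  shows "\<exists>X. compat G u v X \<and> (\<forall>m ws. length ws = m \<and> set ws \<subseteq> H1 G \<longrightarrow> aint G (X m) ws = \<phi> m ws)"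
proof -
  define P where "P n A \<longleftrightarrow> A \<in> QPi G u v \<and> (\<forall>m\<le>n. \<forall>ws. length ws = m \<and> set ws \<subseteq> H1 G \<longrightarrow> aint G A ws = \<phi> m ws)"
    for n A
  have "\<exists>A. P n A" for n
    using exists_QPi_aint[of n \<phi>] \<phi> unfolding P_def by blast
  then have PX: "P n (SOME A. P n A)" for n
    by (rule someI_ex)
  define X where "X n = (SOME A. P n A)" for n
  have Q: "X n \<in> QPi G u v" for n
    using PX unfolding X_def P_def by blast
  have "(\<lambda>c. X (Suc n) c - X n c) \<in> Wfilt G u v (Suc n)" for n
  proof (rule Wfilt_of_aint_vanish)
    show "(\<lambda>c. X (Suc n) c - X n c) \<in> QPi G u v" by (rule subspace_diff[OF rat_subspace_QPi Q Q])
    fix m ws assume "m \<le> n" "length ws = m" "set ws \<subseteq> H1 G"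
    then have "aint G (X (Suc n)) ws = \<phi> m ws" "aint G (X n) ws = \<phi> m ws"
      using PX[of "Suc n"] PX[of n] unfolding X_def P_def by auto
    then show "aint G (\<lambda>c. X (Suc n) c - X n c) ws = 0"
      by (simp add: aint_diff[OF QPi_finite_supp[OF Q] QPi_finite_supp[OF Q]])
  qed
  then have "compat G u v X" using Q unfolding compat_def by blast
  moreover have "\<forall>m ws. length ws = m \<and> set ws \<subseteq> H1 G \<longrightarrow> aint G (X m) ws = \<phi> m ws"
    using PX unfolding X_def P_def by blast
  ultimately show ?thesis by blast
qed

end

theorem theorem4p2:
  fixes G :: "('v, 'e, 'd) graph" and u v :: 'v
  assumes "rat_metrised_graph G" and "u \<in> verts G" and "v \<in> verts G"
  shows
   "(\<forall>n.
       (\<forall>A\<in>QPi G u v. A \<in> Wfilt G u v (Suc n) \<longleftrightarrow>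
           (\<forall>m\<le>n. \<forall>ws. length ws = m \<and> set ws \<subseteq> H1 G \<longrightarrow> aint G A ws = 0)) \<and>
       (\<forall>\<phi>. (\<forall>m\<le>n. multilin (H1 G) m (\<phi> m)) \<longrightarrow>
           (\<exists>A\<in>QPi G u v. \<forall>m\<le>n. \<forall>ws. length ws = m \<and> set ws \<subseteq> H1 G \<longrightarrow> aint G A ws = \<phi> m ws)))
    \<and> (\<forall>X. compat G u v X \<longrightarrow>
           (\<forall>m. multilin (H1 G) m (aint G (X m))) \<and>
           (\<forall>m n ws. m \<le> n \<and> length ws = m \<and> set ws \<subseteq> H1 G \<longrightarrow> aint G (X n) ws = aint G (X m) ws))
    \<and> (\<forall>X Y. compat G u v X \<and> compat G u v Y \<and>
           (\<forall>m ws. length ws = m \<and> set ws \<subseteq> H1 G \<longrightarrow> aint G (X m) ws = aint G (Y m) ws) \<longrightarrow>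
           (\<forall>n. (\<lambda>c. X n c - Y n c) \<in> Wfilt G u v (Suc n)))
    \<and> (\<forall>\<phi>. (\<forall>m. multilin (H1 G) m (\<phi> m)) \<longrightarrow>
           (\<exists>X. compat G u v X \<and>
              (\<forall>m ws. length ws = m \<and> set ws \<subseteq> H1 G \<longrightarrow> aint G (X m) ws = \<phi> m ws)))"
proof -
  interpret based_metrised_graph G u v
    by unfold_locales (use assms in auto)
  show ?thesis
    by (intro conjI allI impI ballI; (elim conjE)?)
      (rule Wfilt_Suc_iff_aint exists_QPi_aint multilin_aint compat_aint_stable compat_diff_Wfilt
        exists_compat; assumption)+
qed

end
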